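(* Let $p$ be a prime, $\tau>0$, $r_E=r_I=0$. Let $S_E,S_I:\mathbb{R}\to\mathbb{R}$ be bounded Lipschitz functions with $S_E(0)=S_I(0)=0$, let $w_{EE},w_{EI},w_{IE},w_{II}\in\mathcal{C}(\mathbb{Z}_p)$ and $h_E,h_I\in\mathcal{C}([0,\infty),\mathcal{C}(\mathbb{Z}_p))$. Let $\mathcal{X}=\mathcal{C}(\mathbb{Z}_p)\times\mathcal{C}(\mathbb{Z}_p)$ with norm $\|(f_1,f_2)\|=\max\{\|f_1\|_\infty,\|f_2\|_\infty\}$ and, for $f=(f_1,f_2)\in\mathcal{X}$ and $s\ge0$, $$\boldsymbol{H}(f,s)=\Big(S_E\big(w_{EE}\ast f_1-w_{EI}\ast f_2+h_E(\cdot,s)\big),\ S_I\big(w_{IE}\ast f_1-w_{II}\ast f_2+h_I(\cdot,s)\big)\Big).$$ Let $(E_0,I_0)\in\mathcal{X}$ and let $u(t)=(E(\cdot,t),I(\cdot,t))\in\mathcal{C}^1([0,\infty),\mathcal{X})$ be the unique solution of $$\partial_tu+\tfrac1\tau u=\tfrac1\tau\boldsymbol{H}(u,t),\qquad u(0)=(E_0,I_0).$$ For $l\ge1$ let $u_l(t)=(E_l(\cdot,t),I_l(\cdot,t))$ be the unique solution in $\mathcal{C}^1([0,\infty),\mathcal{X}_l)$ of the discretized problem $$\partial_tu_l+\tfrac1\tau u_l=\tfrac1\tau\boldsymbol{P}_l\big(\boldsymbol{H}(u_l,t)\big),\qquad u_l(0)=\boldsymbol{P}_l(E_0,I_0).$$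 Then for every $T\in(0,\infty)$, $$\lim_{l\to\infty}\sup_{0\le t\le T}\|u_l(t)-u(t)\|=0.$$
   Context: $\mathbb{Z}_p$ is the ring of $p$-adic integers with $p$-adic absolute value $|\cdot|_p$; it is a compact Abelian group and $dx$ is its Haar measure normalized by $\int_{\mathbb{Z}_p}dx=1$. $\mathcal{C}(\mathbb{Z}_p)$ is the space of real-valued continuous functions on $\mathbb{Z}_p$ with sup norm $\|\cdot\|_\infty$. Convolution: $(w\ast f)(x)=\int_{\mathbb{Z}_p}w(x-y)f(y)\,dx(y)$. $\Omega(p^l|x-a|_p)$ denotes the characteristic function of the ball $a+p^l\mathbb{Z}_p$. $G_l=\{i_0+i_1p+\dots+i_{l-1}p^{l-1}:i_j\in\{0,\dots,p-1\}\}$ is a set of representatives of $\mathbb{Z}_p/p^l\mathbb{Z}_p$. $\mathcal{D}^l(\mathbb{Z}_p)$ is the finite-dimensional space of functions $\sum_{i\in G_l}\varphi(i)\Omega(p^l|x-i|_p)$, $\varphi(i)\in\mathbb{R}$, and $\mathcal{X}_l=\mathcal{D}^l(\mathbb{Z}_p)\times\mathcal{D}^l(\mathbb{Z}_p)\subset\mathcal{X}$ with the same norm. The operator $\boldsymbol{P}_l:\mathcal{X}\to\mathcal{X}_l$ acts componentwise by $(\boldsymbol{P}_lf)(x)=\sum_{i\in G_l}f(i)\,\Omega(p^l|x-i|_p)$. *)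

theory Defs
  imports "HOL-Analysis.Analysis" "HOL-Computational_Algebra.Primes"
begin

text \<open>An element x of Z_p is represented by the sequence of its residues
  x n = x mod p^n in {0..<p^n}, with x n = (x (Suc n)) mod p^n.\<close>

type_synonym zp = "nat \<Rightarrow> int"
type_synonym zfun = "zp \<Rightarrow> real"

definition Zp :: "nat \<Rightarrow> zp set" where
  "Zp p = {x. \<forall>n. 0 \<le> x n \<and> x n < int p ^ n \<and> x n = x (Suc n) mod (int p ^ n)}"

definition zp_of_int :: "nat \<Rightarrow> int \<Rightarrow> zp" where
  "zp_of_int p a = (\<lambda>n. a mod (int p ^ n))"

definition zp_zero :: zp where
  "zp_zero = (\<lambda>n. 0)"

definition zp_sub :: "nat \<Rightarrow> zp \<Rightarrow> zp \<Rightarrow> zp" where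
  "zp_sub p x y = (\<lambda>n. (x n - y n) mod (int p ^ n))"

text \<open>p-adic absolute value: |x|_p = p^(-v) where v is the largest n with x in p^n Z_p.\<close>
definition zp_abs :: "nat \<Rightarrow> zp \<Rightarrow> real" where
  "zp_abs p x = (if x = zp_zero then 0 else inverse (real p ^ (LEAST n. x (Suc n) \<noteq> 0)))"

definition Omega_ball :: "nat \<Rightarrow> nat \<Rightarrow> zp \<Rightarrow> zp \<Rightarrow> real" where
  "Omega_ball p l a x = (if real p ^ l * zp_abs p (zp_sub p x a) \<le> 1 then 1 else 0)"

definition Gl :: "nat \<Rightarrow> nat \<Rightarrow> int set" where
  "Gl p l = {0..<int p ^ l}"

definition zp_continuous :: "nat \<Rightarrow> zfun \<Rightarrow> bool" where
  "zp_continuous p f \<longleftrightarrow> (\<forall>x\<in>Zp p. \<forall>e>0. \<exists>d>0. \<forall>y\<in>Zp p.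
      zp_abs p (zp_sub p x y) < d \<longrightarrow> \<bar>f y - f x\<bar> < e)"

definition supn :: "nat \<Rightarrow> zfun \<Rightarrow> real" where
  "supn p f = (SUP x\<in>Zp p. \<bar>f x\<bar>)"

text \<open>Normalized Haar integral of a continuous function on Z_p, as the limit of
  the Riemann sums over the balls i + p^l Z_p (each of Haar measure p^(-l)).\<close>
definition haar_int :: "nat \<Rightarrow> zfun \<Rightarrow> real" where
  "haar_int p f = lim (\<lambda>l. (\<Sum>i\<in>Gl p l. f (zp_of_int p i)) / real p ^ l)"

definition conv :: "nat \<Rightarrow> zfun \<Rightarrow> zfun \<Rightarrow> zfun" where
  "conv p w f = (\<lambda>x. haar_int p (\<lambda>y. w (zp_sub p x y) * f y))"

type_synonym xel = "zfun \<times> zfun"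

definition in_X :: "nat \<Rightarrow> xel \<Rightarrow> bool" where
  "in_X p f \<longleftrightarrow> zp_continuous p (fst f) \<and> zp_continuous p (snd f)"

definition Xnorm :: "nat \<Rightarrow> xel \<Rightarrow> real" where
  "Xnorm p f = max (supn p (fst f)) (supn p (snd f))"

definition Xsub :: "xel \<Rightarrow> xel \<Rightarrow> xel" where
  "Xsub f g = ((\<lambda>x. fst f x - fst g x), (\<lambda>x. snd f x - snd g x))"

definition in_Dl :: "nat \<Rightarrow> nat \<Rightarrow> zfun \<Rightarrow> bool" where
  "in_Dl p l f \<longleftrightarrow> (\<exists>\<phi>::int \<Rightarrow> real. \<forall>x\<in>Zp p. f x = (\<Sum>i\<in>Gl p l. \<phi> i * Omega_ball p l (zp_of_int p i) x))"

definition in_Xl :: "nat \<Rightarrow> nat \<Rightarrow> xel \<Rightarrow> bool" where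
  "in_Xl p l f \<longleftrightarrow> in_Dl p l (fst f) \<and> in_Dl p l (snd f)"

definition Pl1 :: "nat \<Rightarrow> nat \<Rightarrow> zfun \<Rightarrow> zfun" where
  "Pl1 p l f = (\<lambda>x. \<Sum>i\<in>Gl p l. f (zp_of_int p i) * Omega_ball p l (zp_of_int p i) x)"

definition Pl :: "nat \<Rightarrow> nat \<Rightarrow> xel \<Rightarrow> xel" where
  "Pl p l f = (Pl1 p l (fst f), Pl1 p l (snd f))"

definition cont_time_fun :: "nat \<Rightarrow> (real \<Rightarrow> zfun) \<Rightarrow> bool" where
  "cont_time_fun p h \<longleftrightarrow> (\<forall>s\<ge>0. zp_continuous p (h s)) \<and>
     (\<forall>s\<ge>0. ((\<lambda>s'. supn p (\<lambda>x. h s' x - h s x)) \<longlongrightarrow> 0) (at s within {0..}))"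

definition Hop :: "nat \<Rightarrow> (real \<Rightarrow> real) \<Rightarrow> (real \<Rightarrow> real) \<Rightarrow> zfun \<Rightarrow> zfun \<Rightarrow> zfun \<Rightarrow> zfun
    \<Rightarrow> (real \<Rightarrow> zfun) \<Rightarrow> (real \<Rightarrow> zfun) \<Rightarrow> xel \<Rightarrow> real \<Rightarrow> xel" where
  "Hop p SE SI wEE wEI wIE wII hE hI f s =
     ((\<lambda>x. SE (conv p wEE (fst f) x - conv p wEI (snd f) x + hE s x)),
      (\<lambda>x. SI (conv p wIE (fst f) x - conv p wII (snd f) x + hI s x)))"

text \<open>u is a C^1([0,\<infinity>), X) solution of  u' + u/\<tau> = G(u,t)/\<tau>, u(0) = u0
  (derivatives taken in the norm of X, one-sided at t = 0; equalities in X,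
  i.e. pointwise on Z_p).\<close>
definition is_C1_solution :: "nat \<Rightarrow> real \<Rightarrow> (xel \<Rightarrow> real \<Rightarrow> xel) \<Rightarrow> xel \<Rightarrow> (real \<Rightarrow> xel) \<Rightarrow> bool" where
  "is_C1_solution p \<tau> G u0 u \<longleftrightarrow>
     (\<forall>t\<ge>0. in_X p (u t)) \<and>
     (\<exists>u'. (\<forall>t\<ge>0. in_X p (u' t)) \<and>
        (\<forall>t\<ge>0. ((\<lambda>s. Xnorm p (Xsub (((\<lambda>x. (fst (u s) x - fst (u t) x) / (s - t)),
                                        (\<lambda>x. (snd (u s) x - snd (u t) x) / (s - t))))
                                   (u' t))) \<longlongrightarrow> 0) (at t within {0..})) \<and>
        (\<forall>t\<ge>0. ((\<lambda>s. Xnorm p (Xsub (u' s) (u' t))) \<longlongrightarrow> 0) (at t within {0..})) \<and>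
        (\<forall>t\<ge>0. \<forall>x\<in>Zp p.
            fst (u' t) x + fst (u t) x / \<tau> = fst (G (u t) t) x / \<tau> \<and>
            snd (u' t) x + snd (u t) x / \<tau> = snd (G (u t) t) x / \<tau>)) \<and>
     (\<forall>x\<in>Zp p. fst (u 0) x = fst u0 x \<and> snd (u 0) x = snd u0 x)"

end

(*
  The error e_l = u_l - u satisfies  tau e_l' = - e_l + (P_l H(u_l, t) - H(u, t)),  and
  |P_l H(u_l, t) - H(u, t)| <= K ||e_l(t)|| + |P_l H(u, t) - H(u, t)|, with K a Lipschitz constant
  of H (convolution with w has norm at most ||w|| on C(Z_p)).  The path t |-> H(u(t), t) is
  continuous into C(Z_p), so its image over [0, T] is compact, hence equicontinuous, and P_l,
  which freezes a function on the balls of radius p^-l, approximates it uniformly in t; the same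
  holds for u_0.  Once both approximation errors are below eps, a comparison argument for the
  sup-norm (looking at the first time ||e_l|| touches the barrier 2 eps e^(K t / tau)) gives
  sup_(t <= T) ||e_l(t)|| <= 2 eps e^(K T / tau).
*)
theory Submission
  imports Defs
begin

section \<open>Residue sequences and the p-adic metric\<close>

lemma Zp_range: "x \<in> Zp p \<Longrightarrow> 0 \<le> x n \<and> x n < int p ^ n"
  unfolding Zp_def by blast

lemma Zp_compatible: "x \<in> Zp p \<Longrightarrow> x n = x (Suc n) mod int p ^ n"
  unfolding Zp_def by blast

lemma Zp_pos: "x \<in> Zp p \<Longrightarrow> p > 0"
  using Zp_range[of x p 1] by (cases "p = 0") auto

lemma Zp_residue_mod:
  assumes x: "x \<in> Zp p" and "n \<le> k"
  shows "x n = x k mod int p ^ n"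
  using \<open>n \<le> k\<close>
proof (induction k)
  case 0
  with Zp_range[OF x, of 0] show ?case by simp
next
  case (Suc k)
  show ?case
  proof (cases "n = Suc k")
    case True
    with Zp_range[OF x, of n] show ?thesis by simp
  next
    case False
    with Suc have "x n = x k mod int p ^ n" by simp
    also have "x k = x (Suc k) mod int p ^ k" by (rule Zp_compatible[OF x])
    finally show ?thesis
      using False Suc.prems by (simp add: mod_mod_cancel le_imp_power_dvd)
  qed
qed

lemma Zp_eq_level_mono:
  "x \<in> Zp p \<Longrightarrow> y \<in> Zp p \<Longrightarrow> x k = y k \<Longrightarrow> n \<le> k \<Longrightarrow> x n = y n"
  using Zp_residue_mod[of x p n k] Zp_residue_mod[of y p n k] by simp

lemma zp_of_int_in_Zp: "p > 0 \<Longrightarrow> zp_of_int p i \<in> Zp p"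
  unfolding Zp_def zp_of_int_def by (auto simp: mod_mod_cancel)

lemma zp_zero_in_Zp: "p > 0 \<Longrightarrow> zp_zero \<in> Zp p"
  unfolding Zp_def zp_zero_def by auto

lemma zp_of_int_level: "x \<in> Zp p \<Longrightarrow> m \<le> l \<Longrightarrow> zp_of_int p (x l) m = x m"
  using Zp_residue_mod[of x p m l] by (simp add: zp_of_int_def)

lemma zp_sub_in_Zp:
  assumes x: "x \<in> Zp p" and y: "y \<in> Zp p"
  shows "zp_sub p x y \<in> Zp p"
  unfolding Zp_def
proof (intro CollectI allI conjI)
  fix n
  show "0 \<le> zp_sub p x y n" "zp_sub p x y n < int p ^ n"
    using Zp_pos[OF x] by (simp_all add: zp_sub_def)
  from Zp_compatible[OF x, of n] Zp_compatible[OF y, of n]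
  show "zp_sub p x y n = zp_sub p x y (Suc n) mod int p ^ n"
    by (simp add: zp_sub_def mod_mod_cancel le_imp_power_dvd mod_diff_eq del: power_Suc)
qed

lemma zp_sub_eq_0_iff:
  assumes x: "x \<in> Zp p" and y: "y \<in> Zp p"
  shows "zp_sub p x y n = 0 \<longleftrightarrow> x n = y n"
proof
  assume "zp_sub p x y n = 0"
  then have "int p ^ n dvd x n - y n" by (simp add: zp_sub_def mod_eq_0_iff_dvd)
  moreover have "\<bar>x n - y n\<bar> < int p ^ n" using Zp_range[OF x, of n] Zp_range[OF y, of n] by linarith
  ultimately show "x n = y n"
    using dvd_imp_le_int[of "x n - y n" "int p ^ n"] by fastforce
qed (simp add: zp_sub_def)

lemma zp_abs_sub_le_iff:
  assumes p: "p > 1" and x: "x \<in> Zp p" and y: "y \<in> Zp p"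
  shows "zp_abs p (zp_sub p x y) \<le> inverse (real p ^ m) \<longleftrightarrow> x m = y m"
proof (cases "zp_sub p x y = zp_zero")
  case True
  then show ?thesis
    using zp_sub_eq_0_iff[OF x y] by (auto simp: zp_abs_def zp_zero_def)
next
  case False
  let ?z = "zp_sub p x y"
  define v where "v = (LEAST n. ?z (Suc n) \<noteq> 0)"
  have z: "?z \<in> Zp p" by (rule zp_sub_in_Zp[OF x y])
  have "?z 0 = 0" by (simp add: zp_sub_def)
  moreover obtain n where "?z n \<noteq> 0" using False by (auto simp: zp_zero_def)
  ultimately obtain n' where "?z (Suc n') \<noteq> 0" by (cases n) auto
  then have v: "?z (Suc v) \<noteq> 0" unfolding v_def by (rule LeastI)
  have level: "m \<le> v \<longleftrightarrow> ?z m = 0"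
  proof
    assume "m \<le> v"
    show "?z m = 0"
    proof (cases m)
      case (Suc k)
      with \<open>m \<le> v\<close> have "k < v" by simp
      then show ?thesis using not_less_Least[of k "\<lambda>n. ?z (Suc n) \<noteq> 0"] Suc by (simp add: v_def)
    qed (use \<open>?z 0 = 0\<close> in simp)
  next
    assume "?z m = 0"
    show "m \<le> v"
    proof (rule ccontr)
      assume "\<not> m \<le> v"
      then have "?z (Suc v) = ?z m mod int p ^ Suc v" using Zp_residue_mod[OF z, of "Suc v" m] by simp
      with \<open>?z m = 0\<close> v show False by simp
    qed
  qed
  have "zp_abs p ?z = inverse (real p ^ v)"
    using False by (simp add: zp_abs_def v_def)
  moreover have "inverse (real p ^ v) \<le> inverse (real p ^ m) \<longleftrightarrow> m \<le> v"
    using p by simp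
  ultimately show ?thesis
    by (simp only: level zp_sub_eq_0_iff[OF x y])
qed

lemma Omega_ball_eq:
  assumes "p > 1" "x \<in> Zp p" "y \<in> Zp p"
  shows "Omega_ball p l y x = (if x l = y l then 1 else 0)"
proof -
  have "real p ^ l * r \<le> 1 \<longleftrightarrow> r \<le> inverse (real p ^ l)" for r
    using assms(1) by (simp add: field_simps)
  then show ?thesis using zp_abs_sub_le_iff[OF assms] by (simp add: Omega_ball_def)
qed

lemma Pl1_eq:
  assumes p: "p > 1" and x: "x \<in> Zp p"
  shows "Pl1 p l f x = f (zp_of_int p (x l))"
proof -
  have "Pl1 p l f x = (\<Sum>i\<in>Gl p l. if i = x l then f (zp_of_int p i) else 0)"
    unfolding Pl1_def
  proof (rule sum.cong[OF refl])
    fix i assume "i \<in> Gl p l"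
    then have "zp_of_int p i l = i" by (simp add: Gl_def zp_of_int_def)
    then show "f (zp_of_int p i) * Omega_ball p l (zp_of_int p i) x = (if i = x l then f (zp_of_int p i) else 0)"
      using Omega_ball_eq[OF p x zp_of_int_in_Zp] p by auto
  qed
  also have "\<dots> = f (zp_of_int p (x l))"
    using Zp_range[OF x, of l] by (simp add: Gl_def)
  finally show ?thesis .
qed

section \<open>Oscillation on balls and uniform continuity\<close>

lemma lipschitz_on_UNIV_abs_le: "L-lipschitz_on UNIV S \<Longrightarrow> \<bar>S a - S b\<bar> \<le> L * \<bar>a - b\<bar>"
  using lipschitz_onD[of L UNIV S a b] by (simp add: dist_real_def)

(* Points x, y of Z_p with x m = y m are exactly those in a common ball of radius p^-m. *)
definition osc_le :: "nat \<Rightarrow> nat \<Rightarrow> zfun \<Rightarrow> real \<Rightarrow> bool" where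
  "osc_le p m f e \<longleftrightarrow> (\<forall>x\<in>Zp p. \<forall>y\<in>Zp p. x m = y m \<longrightarrow> \<bar>f x - f y\<bar> \<le> e)"

definition zp_ucont :: "nat \<Rightarrow> zfun \<Rightarrow> bool" where
  "zp_ucont p f \<longleftrightarrow> (\<forall>e>0. \<forall>\<^sub>F m in sequentially. osc_le p m f e)"

lemma osc_leD: "osc_le p m f e \<Longrightarrow> x \<in> Zp p \<Longrightarrow> y \<in> Zp p \<Longrightarrow> x m = y m \<Longrightarrow> \<bar>f x - f y\<bar> \<le> e"
  unfolding osc_le_def by blast

lemma osc_le_mono: "osc_le p m f e \<Longrightarrow> m \<le> n \<Longrightarrow> osc_le p n f e"
  unfolding osc_le_def by (meson Zp_eq_level_mono)

lemma zp_ucontI: "(\<And>e. e > 0 \<Longrightarrow> \<exists>m. osc_le p m f e) \<Longrightarrow> zp_ucont p f"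
  unfolding zp_ucont_def eventually_sequentially by (meson osc_le_mono)

lemma zp_ucontD: "zp_ucont p f \<Longrightarrow> e > 0 \<Longrightarrow> \<exists>m. osc_le p m f e"
  unfolding zp_ucont_def eventually_sequentially by blast

lemma osc_le_add:
  assumes "osc_le p m f a" "osc_le p m g b"
  shows "osc_le p m (\<lambda>x. f x + g x) (a + b)"
  unfolding osc_le_def
proof (intro ballI impI)
  fix x y assume "x \<in> Zp p" "y \<in> Zp p" "x m = y m"
  with assms have "\<bar>f x - f y\<bar> \<le> a" "\<bar>g x - g y\<bar> \<le> b" unfolding osc_le_def by blast+
  then show "\<bar>f x + g x - (f y + g y)\<bar> \<le> a + b" by arith
qed

lemma zp_ucont_add:
  assumes "zp_ucont p f" "zp_ucont p g"
  shows "zp_ucont p (\<lambda>x. f x + g x)"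
  unfolding zp_ucont_def
proof (intro allI impI)
  fix e :: real assume "e > 0"
  with assms have "\<forall>\<^sub>F m in sequentially. osc_le p m f (e/2) \<and> osc_le p m g (e/2)"
    unfolding zp_ucont_def by (simp add: eventually_conj)
  then show "\<forall>\<^sub>F m in sequentially. osc_le p m (\<lambda>x. f x + g x) e"
    by eventually_elim (metis osc_le_add field_sum_of_halves)
qed

lemma zp_ucont_lipschitz_comp:
  assumes S: "L-lipschitz_on UNIV S" and f: "zp_ucont p f"
  shows "zp_ucont p (\<lambda>x. S (f x))"
  unfolding zp_ucont_def
proof (intro allI impI)
  fix e :: real assume "e > 0"
  have L: "L \<ge> 0" by (rule lipschitz_on_nonneg[OF S])
  with \<open>e > 0\<close> have "\<forall>\<^sub>F m in sequentially. osc_le p m f (e / (L + 1))"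
    using f unfolding zp_ucont_def by simp
  then show "\<forall>\<^sub>F m in sequentially. osc_le p m (\<lambda>x. S (f x)) e"
  proof eventually_elim
    case (elim m)
    have "L * (e / (L + 1)) \<le> e" using L \<open>e > 0\<close> by (simp add: field_simps)
    then show ?case
      using elim L lipschitz_on_UNIV_abs_le[OF S] unfolding osc_le_def by (meson mult_left_mono order_trans)
  qed
qed

lemma zp_ucont_bounded:
  assumes "zp_ucont p f"
  obtains M where "M \<ge> 0" "\<And>x. x \<in> Zp p \<Longrightarrow> \<bar>f x\<bar> \<le> M"
proof -
  obtain m where m: "osc_le p m f 1" using zp_ucontD[OF assms, of 1] by auto
  define M where "M = Max ((\<lambda>i. \<bar>f (zp_of_int p i)\<bar>) ` {0..<int p ^ m})"
  have "\<bar>f x\<bar> \<le> M + 1" if x: "x \<in> Zp p" for x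
  proof -
    have "x m \<in> {0..<int p ^ m}" using Zp_range[OF x] by simp
    then have "\<bar>f (zp_of_int p (x m))\<bar> \<le> M" unfolding M_def by (intro Max_ge) auto
    moreover have "\<bar>f x - f (zp_of_int p (x m))\<bar> \<le> 1"
      using m x zp_of_int_in_Zp[OF Zp_pos[OF x]] zp_of_int_level[OF x, of m m]
      unfolding osc_le_def by simp
    ultimately show ?thesis by linarith
  qed
  then show ?thesis using that[of "max (M + 1) 0"] by force
qed

lemma zp_ucont_cmult:
  assumes "zp_ucont p f" shows "zp_ucont p (\<lambda>x. c * f x)"
  using zp_ucont_lipschitz_comp[OF lipschitz_on_cmult_real[OF lipschitz_on_id] assms] by simp

lemma zp_ucont_diff:
  assumes "zp_ucont p f" "zp_ucont p g"
  shows "zp_ucont p (\<lambda>x. f x - g x)"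
  using zp_ucont_add[OF assms(1) zp_ucont_cmult[OF assms(2), of "-1"]] by simp

lemma zp_ucont_mult:
  assumes f: "zp_ucont p f" and g: "zp_ucont p g"
  shows "zp_ucont p (\<lambda>x. f x * g x)"
  unfolding zp_ucont_def
proof (intro allI impI)
  fix e :: real assume "e > 0"
  obtain Mf where Mf: "Mf \<ge> 0" "\<And>x. x \<in> Zp p \<Longrightarrow> \<bar>f x\<bar> \<le> Mf" using zp_ucont_bounded[OF f] by blast
  obtain Mg where Mg: "Mg \<ge> 0" "\<And>x. x \<in> Zp p \<Longrightarrow> \<bar>g x\<bar> \<le> Mg" using zp_ucont_bounded[OF g] by blast
  define \<eta> where "\<eta> = e / (Mf + Mg + 1)"
  have "\<eta> > 0" using \<open>e > 0\<close> Mf Mg by (simp add: \<eta>_def)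
  then have "\<forall>\<^sub>F m in sequentially. osc_le p m f \<eta> \<and> osc_le p m g \<eta>"
    using f g unfolding zp_ucont_def by (simp add: eventually_conj)
  then show "\<forall>\<^sub>F m in sequentially. osc_le p m (\<lambda>x. f x * g x) e"
  proof eventually_elim
    case (elim m)
    show ?case unfolding osc_le_def
    proof (intro ballI impI)
      fix x y assume xy: "x \<in> Zp p" "y \<in> Zp p" "x m = y m"
      have "\<bar>f x * g x - f y * g y\<bar> = \<bar>(f x - f y) * g x + f y * (g x - g y)\<bar>"
        by (simp add: algebra_simps)
      also have "\<dots> \<le> \<bar>f x - f y\<bar> * \<bar>g x\<bar> + \<bar>f y\<bar> * \<bar>g x - g y\<bar>"
        using abs_triangle_ineq by (metis abs_mult)
      also have "\<dots> \<le> \<eta> * Mg + Mf * \<eta>"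
        using elim xy Mf Mg \<open>\<eta> > 0\<close> unfolding osc_le_def by (intro add_mono mult_mono) auto
      also have "\<dots> = (Mf + Mg) * \<eta>" by (simp add: algebra_simps)
      also have "\<dots> \<le> (Mf + Mg + 1) * \<eta>" using \<open>\<eta> > 0\<close> by (intro mult_right_mono) auto
      also have "\<dots> = e" using Mf Mg unfolding \<eta>_def by simp
      finally show "\<bar>f x * g x - f y * g y\<bar> \<le> e" .
    qed
  qed
qed

lemma abs_le_supn: "zp_ucont p f \<Longrightarrow> x \<in> Zp p \<Longrightarrow> \<bar>f x\<bar> \<le> supn p f"
  unfolding supn_def
  by (rule cSUP_upper) (auto intro: bdd_aboveI2 elim!: zp_ucont_bounded)

lemma supn_le: "p > 0 \<Longrightarrow> (\<And>x. x \<in> Zp p \<Longrightarrow> \<bar>f x\<bar> \<le> c) \<Longrightarrow> supn p f \<le> c"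
  unfolding supn_def using zp_zero_in_Zp by (intro cSUP_least) auto

lemma zp_continuous_imp_level:
  assumes p: "p > 1" and f: "zp_continuous p f" and x: "x \<in> Zp p" and "e > 0"
  shows "\<exists>m. \<forall>y\<in>Zp p. y m = x m \<longrightarrow> \<bar>f y - f x\<bar> < e"
proof -
  obtain d where d: "d > 0" "\<forall>y\<in>Zp p. zp_abs p (zp_sub p x y) < d \<longrightarrow> \<bar>f y - f x\<bar> < e"
    using f x \<open>e > 0\<close> unfolding zp_continuous_def by blast
  have "inverse (real p) < 1" using p by (auto simp: inverse_less_1_iff)
  then obtain m where m: "inverse (real p) ^ m < d"
    using real_arch_pow_inv[OF d(1)] by blast
  have "zp_abs p (zp_sub p x y) < d" if "y \<in> Zp p" "y m = x m" for y
    using zp_abs_sub_le_iff[OF p x that(1), of m] that(2) m by (simp add: power_inverse)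
  with d show ?thesis by blast
qed

lemma zp_ucont_imp_continuous:
  assumes p: "p > 1" and f: "zp_ucont p f"
  shows "zp_continuous p f"
  unfolding zp_continuous_def
proof (intro ballI allI impI)
  fix x e assume x: "x \<in> Zp p" and "(e::real) > 0"
  then obtain m where m: "osc_le p m f (e/2)" using zp_ucontD[OF f, of "e/2"] by auto
  have "\<bar>f y - f x\<bar> < e" if "y \<in> Zp p" "zp_abs p (zp_sub p x y) < inverse (real p ^ m)" for y
    using m zp_abs_sub_le_iff[OF p x that(1), of m] that x \<open>e > 0\<close> unfolding osc_le_def by force
  then show "\<exists>d>0. \<forall>y\<in>Zp p. zp_abs p (zp_sub p x y) < d \<longrightarrow> \<bar>f y - f x\<bar> < e"
    using p by (intro exI[of _ "inverse (real p ^ m)"]) auto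
qed

definition continuous_on_uniformly :: "'a set \<Rightarrow> real set \<Rightarrow> (real \<Rightarrow> 'a \<Rightarrow> real) \<Rightarrow> bool" where
  "continuous_on_uniformly A I F \<longleftrightarrow>
     (\<forall>t\<in>I. \<forall>e>0. \<forall>\<^sub>F s in at t within I. \<forall>a\<in>A. \<bar>F s a - F t a\<bar> \<le> e)"

definition has_derivative_uniformly ::
    "'a set \<Rightarrow> real set \<Rightarrow> (real \<Rightarrow> 'a \<Rightarrow> real) \<Rightarrow> (real \<Rightarrow> 'a \<Rightarrow> real) \<Rightarrow> bool" where
  "has_derivative_uniformly A I F F' \<longleftrightarrow>
     (\<forall>t\<in>I. \<forall>e>0. \<forall>\<^sub>F s in at t within I. \<forall>a\<in>A. \<bar>F s a - F t a - (s - t) * F' t a\<bar> \<le> e * \<bar>s - t\<bar>)"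

lemma eventually_at_within_mem: "\<forall>\<^sub>F s in at t within I. s \<in> I \<and> s \<noteq> t"
  unfolding eventually_at_filter by simp

lemma continuous_on_uniformly_subset:
  "continuous_on_uniformly A I F \<Longrightarrow> J \<subseteq> I \<Longrightarrow> continuous_on_uniformly A J F"
  unfolding continuous_on_uniformly_def by (meson at_le filter_leD subsetD)

lemma has_derivative_uniformly_subset:
  "has_derivative_uniformly A I F F' \<Longrightarrow> J \<subseteq> I \<Longrightarrow> has_derivative_uniformly A J F F'"
  unfolding has_derivative_uniformly_def by (meson at_le filter_leD subsetD)

lemma continuous_on_uniformly_diff:
  assumes "continuous_on_uniformly A I F" "continuous_on_uniformly A I G"
  shows "continuous_on_uniformly A I (\<lambda>t a. F t a - G t a)"
  unfolding continuous_on_uniformly_def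
proof (intro ballI allI impI)
  fix t e assume "t \<in> I" "(e::real) > 0"
  then have "e/2 > 0" by simp
  with assms \<open>t \<in> I\<close> have "\<forall>\<^sub>F s in at t within I. \<forall>a\<in>A. \<bar>F s a - F t a\<bar> \<le> e/2"
    "\<forall>\<^sub>F s in at t within I. \<forall>a\<in>A. \<bar>G s a - G t a\<bar> \<le> e/2"
    unfolding continuous_on_uniformly_def by blast+
  then show "\<forall>\<^sub>F s in at t within I. \<forall>a\<in>A. \<bar>F s a - G s a - (F t a - G t a)\<bar> \<le> e"
  proof eventually_elim
    case (elim s)
    then show ?case by (smt (verit) field_sum_of_halves)
  qed
qed

lemma has_derivative_uniformly_diff:
  assumes "has_derivative_uniformly A I F F'" "has_derivative_uniformly A I G G'"
  shows "has_derivative_uniformly A I (\<lambda>t a. F t a - G t a) (\<lambda>t a. F' t a - G' t a)"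
  unfolding has_derivative_uniformly_def
proof (intro ballI allI impI)
  fix t e assume "t \<in> I" "(e::real) > 0"
  then have "e/2 > 0" by simp
  with assms \<open>t \<in> I\<close> have "\<forall>\<^sub>F s in at t within I.
      (\<forall>a\<in>A. \<bar>F s a - F t a - (s - t) * F' t a\<bar> \<le> e/2 * \<bar>s - t\<bar>) \<and>
      (\<forall>a\<in>A. \<bar>G s a - G t a - (s - t) * G' t a\<bar> \<le> e/2 * \<bar>s - t\<bar>)"
    unfolding has_derivative_uniformly_def by (intro eventually_conj) blast+
  then show "\<forall>\<^sub>F s in at t within I. \<forall>a\<in>A.
      \<bar>F s a - G s a - (F t a - G t a) - (s - t) * (F' t a - G' t a)\<bar> \<le> e * \<bar>s - t\<bar>"
  proof eventually_elim
    case (elim s)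
    show ?case
    proof
      fix a assume "a \<in> A"
      with elim have "\<bar>F s a - F t a - (s - t) * F' t a\<bar> \<le> e/2 * \<bar>s - t\<bar>"
        "\<bar>G s a - G t a - (s - t) * G' t a\<bar> \<le> e/2 * \<bar>s - t\<bar>" by auto
      moreover have "F s a - G s a - (F t a - G t a) - (s - t) * (F' t a - G' t a) =
          (F s a - F t a - (s - t) * F' t a) - (G s a - G t a - (s - t) * G' t a)"
        by (simp add: algebra_simps)
      moreover have "e/2 * \<bar>s - t\<bar> + e/2 * \<bar>s - t\<bar> = e * \<bar>s - t\<bar>" by simp
      ultimately show "\<bar>F s a - G s a - (F t a - G t a) - (s - t) * (F' t a - G' t a)\<bar> \<le> e * \<bar>s - t\<bar>"
        using abs_triangle_ineq4 by (smt (verit))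
    qed
  qed
qed

lemma has_derivative_uniformly_imp_continuous:
  assumes der: "has_derivative_uniformly A I F F'" and bounded: "\<And>t. t \<in> I \<Longrightarrow> \<exists>M. \<forall>a\<in>A. \<bar>F' t a\<bar> \<le> M"
  shows "continuous_on_uniformly A I F"
  unfolding continuous_on_uniformly_def
proof (intro ballI allI impI)
  fix t e assume t: "t \<in> I" and "(e::real) > 0"
  obtain M where M: "M \<ge> 0" "\<And>a. a \<in> A \<Longrightarrow> \<bar>F' t a\<bar> \<le> M"
    using bounded[OF t] by (meson abs_ge_zero order_trans nle_le)
  have "e / (M + 1) > 0" using \<open>e > 0\<close> M(1) by simp
  moreover have "\<forall>\<^sub>F s in at t within I. \<forall>a\<in>A. \<bar>F s a - F t a - (s - t) * F' t a\<bar> \<le> 1 * \<bar>s - t\<bar>"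
    using der[unfolded has_derivative_uniformly_def, rule_format, OF t zero_less_one] .
  ultimately have "\<forall>\<^sub>F s in at t within I. dist s t < e / (M + 1) \<and>
      (\<forall>a\<in>A. \<bar>F s a - F t a - (s - t) * F' t a\<bar> \<le> 1 * \<bar>s - t\<bar>)"
    by (rule eventually_conj[OF tendstoD[OF tendsto_ident_at]])
  then show "\<forall>\<^sub>F s in at t within I. \<forall>a\<in>A. \<bar>F s a - F t a\<bar> \<le> e"
  proof eventually_elim
    case (elim s)
    show ?case
    proof
      fix a assume a: "a \<in> A"
      have "\<bar>(s - t) * F' t a\<bar> \<le> \<bar>s - t\<bar> * M"
        using M(2)[OF a] by (simp add: abs_mult mult_left_mono)
      then have "\<bar>F s a - F t a\<bar> \<le> \<bar>s - t\<bar> + \<bar>s - t\<bar> * M"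
        using elim a abs_triangle_ineq[of "F s a - F t a - (s - t) * F' t a" "(s - t) * F' t a"] by auto
      also have "\<dots> = \<bar>s - t\<bar> * (M + 1)" by (simp add: algebra_simps)
      also have "\<dots> \<le> e"
        using elim M(1) by (simp add: dist_real_def pos_less_divide_eq less_imp_le)
      finally show "\<bar>F s a - F t a\<bar> \<le> e" .
    qed
  qed
qed

(* Koenig's lemma: fix the residues level by level, keeping infinitely many terms. *)
lemma Zp_cluster_point:
  fixes xs :: "nat \<Rightarrow> zp"
  assumes xs: "\<And>k. xs k \<in> Zp p"
  shows "\<exists>z\<in>Zp p. \<forall>n. infinite {k. xs k n = z n}"
proof -
  have split: "\<exists>b. infinite {k. xs k n = a \<and> xs k (Suc n) = b}" if "infinite {k. xs k n = a}" for n a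
  proof -
    have "xs k (Suc n) \<in> {0..<int p ^ Suc n}" for k
      using Zp_range[OF xs, of k "Suc n"] by simp
    then have "{k. xs k n = a} = (\<Union>b\<in>{0..<int p ^ Suc n}. {k. xs k n = a \<and> xs k (Suc n) = b})"
      by blast
    with that show ?thesis by auto
  qed
  define z where "z = rec_nat 0 (\<lambda>n a. SOME b. infinite {k. xs k n = a \<and> xs k (Suc n) = b})"
  have z_Suc: "z (Suc n) = (SOME b. infinite {k. xs k n = z n \<and> xs k (Suc n) = b})" for n
    by (simp add: z_def)
  have infinite_z: "infinite {k. xs k n = z n}" for n
  proof (induction n)
    case 0
    have "xs k 0 = z 0" for k using Zp_range[OF xs, of k 0] by (simp add: z_def)
    then show ?case by (simp add: infinite_UNIV_nat)
  next
    case (Suc n)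
    have "infinite {k. xs k n = z n \<and> xs k (Suc n) = z (Suc n)}"
      unfolding z_Suc using split[OF Suc] by (rule someI_ex)
    then show ?case by (rule infinite_super[rotated]) auto
  qed
  have "z \<in> Zp p" unfolding Zp_def
  proof (intro CollectI allI)
    fix n
    have "infinite {k. xs k n = z n \<and> xs k (Suc n) = z (Suc n)}"
      unfolding z_Suc using split[OF infinite_z] by (rule someI_ex)
    then obtain k where "xs k n = z n" "xs k (Suc n) = z (Suc n)" using not_finite_existsD by auto
    with Zp_range[OF xs, of k n] Zp_compatible[OF xs, of k n]
    show "0 \<le> z n \<and> z n < int p ^ n \<and> z n = z (Suc n) mod int p ^ n" by simp
  qed
  with infinite_z show ?thesis by blast
qed

(* Compactness of [0, T] and of Z_p: a continuous path in C(Z_p) is equicontinuous. *)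
lemma osc_le_uniform_on_interval:
  assumes p: "p > 1" and cont: "\<And>t. t \<in> {0..T} \<Longrightarrow> zp_continuous p (F t)"
    and tcont: "continuous_on_uniformly (Zp p) {0..T} F" and "e > 0"
  shows "\<exists>m. \<forall>t\<in>{0..T}. osc_le p m (F t) e"
proof (rule ccontr)
  assume "\<nexists>m. \<forall>t\<in>{0..T}. osc_le p m (F t) e"
  then have "\<forall>m. \<exists>t x y. t \<in> {0..T} \<and> x \<in> Zp p \<and> y \<in> Zp p \<and> x m = y m \<and> \<bar>F t x - F t y\<bar> > e"
    unfolding osc_le_def by (meson not_le)
  then obtain ts xs ys where bad: "\<And>m. ts m \<in> {0..T}" "\<And>m. xs m \<in> Zp p" "\<And>m. ys m \<in> Zp p"
    "\<And>m. xs m m = ys m m" "\<And>m. \<bar>F (ts m) (xs m) - F (ts m) (ys m)\<bar> > e"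
    by metis
  obtain t r where t: "t \<in> {0..T}" and r: "strict_mono r" "(ts \<circ> r) \<longlonglongrightarrow> t"
    using compact_Icc[THEN compact_imp_seq_compact] bad(1) unfolding seq_compact_def by metis
  obtain z where z: "z \<in> Zp p" "\<And>n. infinite {k. xs (r k) n = z n}"
    using Zp_cluster_point[of "\<lambda>k. xs (r k)"] bad(2) by blast
  obtain m where m: "\<And>y. y \<in> Zp p \<Longrightarrow> y m = z m \<Longrightarrow> \<bar>F t y - F t z\<bar> < e/4"
    using zp_continuous_imp_level[OF p cont[OF t] z(1), of "e/4"] \<open>e > 0\<close> by auto
  have "\<forall>\<^sub>F s in at t within {0..T}. \<forall>x\<in>Zp p. \<bar>F s x - F t x\<bar> \<le> e/4"
    using tcont t \<open>e > 0\<close> unfolding continuous_on_uniformly_def by (meson zero_less_divide_iff zero_less_numeral)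
  then have "\<forall>\<^sub>F s in nhds t. s \<in> {0..T} \<longrightarrow> (\<forall>x\<in>Zp p. \<bar>F s x - F t x\<bar> \<le> e/4)"
    unfolding eventually_at_filter by eventually_elim (use \<open>e > 0\<close> in auto)
  from eventually_compose_filterlim[OF this r(2)] obtain N where
    N: "\<And>k x. k \<ge> N \<Longrightarrow> x \<in> Zp p \<Longrightarrow> \<bar>F (ts (r k)) x - F t x\<bar> \<le> e/4"
    using bad(1) unfolding eventually_sequentially by auto
  obtain k where k: "k \<ge> max N m" "xs (r k) m = z m"
    using z(2)[of m] unfolding infinite_nat_iff_unbounded_le by blast
  have "m \<le> r k" using k(1) seq_suble[OF r(1), of k] by simp
  then have "ys (r k) m = z m"
    using Zp_eq_level_mono[OF bad(2,3) bad(4)] k(2) by metis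
  then have "\<bar>F t (xs (r k)) - F t z\<bar> < e/4" "\<bar>F t (ys (r k)) - F t z\<bar> < e/4"
    using m bad(2,3) k(2) by auto
  moreover have "\<bar>F (ts (r k)) (xs (r k)) - F t (xs (r k))\<bar> \<le> e/4"
    "\<bar>F (ts (r k)) (ys (r k)) - F t (ys (r k))\<bar> \<le> e/4"
    using N bad(2,3) k(1) by auto
  ultimately show False using bad(5)[of "r k"] by linarith
qed

lemma zp_continuous_imp_ucont:
  assumes p: "p > 1" and f: "zp_continuous p f"
  shows "zp_ucont p f"
proof (rule zp_ucontI)
  fix e :: real assume "e > 0"
  have "continuous_on_uniformly (Zp p) {0..0} (\<lambda>_. f)"
    by (simp add: continuous_on_uniformly_def)
  from osc_le_uniform_on_interval[OF p _ this \<open>e > 0\<close>] f show "\<exists>m. osc_le p m f e" by auto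
qed

lemma cont_time_fun_ucont: "p > 1 \<Longrightarrow> cont_time_fun p h \<Longrightarrow> s \<ge> 0 \<Longrightarrow> zp_ucont p (h s)"
  unfolding cont_time_fun_def by (simp add: zp_continuous_imp_ucont)

lemma cont_time_fun_continuous_on_uniformly:
  assumes p: "p > 1" and h: "cont_time_fun p h"
  shows "continuous_on_uniformly (Zp p) {0..} h"
  unfolding continuous_on_uniformly_def
proof (intro ballI allI impI)
  fix t e :: real assume t: "t \<in> {0..}" and "e > 0"
  have "((\<lambda>s. supn p (\<lambda>x. h s x - h t x)) \<longlongrightarrow> 0) (at t within {0..})"
    using h t unfolding cont_time_fun_def by simp
  from order_tendstoD(2)[OF this \<open>e > 0\<close>] eventually_at_within_mem[of "{0..}" t]
  have "\<forall>\<^sub>F s in at t within {0..}. s \<ge> 0 \<and> supn p (\<lambda>x. h s x - h t x) < e"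
    by eventually_elim auto
  then show "\<forall>\<^sub>F s in at t within {0..}. \<forall>x\<in>Zp p. \<bar>h s x - h t x\<bar> \<le> e"
  proof eventually_elim
    case (elim s)
    then have "zp_ucont p (\<lambda>x. h s x - h t x)"
      using t by (intro zp_ucont_diff cont_time_fun_ucont[OF p h]) auto
    with elim show ?case using abs_le_supn by fastforce
  qed
qed

section \<open>Haar integral and convolution\<close>

definition riemann_sum :: "nat \<Rightarrow> zfun \<Rightarrow> nat \<Rightarrow> real" where
  "riemann_sum p g l = (\<Sum>n<p ^ l. g (zp_of_int p (int n))) / real p ^ l"

lemma haar_int_eq_lim: "haar_int p g = lim (riemann_sum p g)"
proof -
  have "Gl p l = int ` {..<p ^ l}" for l
    by (simp add: Gl_def lessThan_atLeast0 image_int_atLeastLessThan)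
  then show ?thesis
    unfolding haar_int_def riemann_sum_def by (simp add: sum.reindex)
qed

lemma sum_lessThan_mult_mod:
  fixes F :: "nat \<Rightarrow> real"
  shows "(\<Sum>i<N * M. F (i mod M)) = real N * (\<Sum>j<M. F j)"
proof (induction N)
  case (Suc N)
  have "(\<Sum>i<Suc N * M. F (i mod M)) = (\<Sum>i<N * M. F (i mod M)) + (\<Sum>i\<in>{N * M..<Suc N * M}. F (i mod M))"
    by (simp add: lessThan_atLeast0 sum.atLeastLessThan_concat)
  also have "(\<Sum>i\<in>{N * M..<Suc N * M}. F (i mod M)) = (\<Sum>j<M. F j)"
    using sum.shift_bounds_nat_ivl[of "\<lambda>i. F (i mod M)" 0 "N * M" M]
    by (simp add: lessThan_atLeast0 add.commute)
  finally show ?case using Suc by (simp add: algebra_simps)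
qed simp

lemma riemann_sum_osc:
  assumes p: "p > 0" and g: "osc_le p m g e" and "m \<le> l"
  shows "\<bar>riemann_sum p g l - riemann_sum p g m\<bar> \<le> e"
proof -
  define F where "F n = g (zp_of_int p (int n))" for n
  have pl: "p ^ l = p ^ (l - m) * p ^ m" using \<open>m \<le> l\<close> by (simp flip: power_add)
  have plr: "real p ^ l = real p ^ (l - m) * real p ^ m" using \<open>m \<le> l\<close> by (simp flip: power_add)
  have "(\<Sum>n<p ^ l. F (n mod p ^ m)) / real p ^ l = riemann_sum p g m"
    unfolding pl sum_lessThan_mult_mod using p by (simp add: riemann_sum_def F_def plr)
  then have diff: "riemann_sum p g l - riemann_sum p g m = (\<Sum>n<p ^ l. F n - F (n mod p ^ m)) / real p ^ l"
    by (simp add: riemann_sum_def F_def sum_subtractf diff_divide_distrib)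
  have bound: "\<bar>F n - F (n mod p ^ m)\<bar> \<le> e" for n
  proof -
    have "zp_of_int p (int n) m = zp_of_int p (int (n mod p ^ m)) m"
      by (simp add: zp_of_int_def of_nat_mod)
    then show ?thesis unfolding F_def by (rule osc_leD[OF g zp_of_int_in_Zp[OF p] zp_of_int_in_Zp[OF p]])
  qed
  have "(\<Sum>n<p ^ l. \<bar>F n - F (n mod p ^ m)\<bar>) \<le> (\<Sum>n<p ^ l. e)"
    by (intro sum_mono) (rule bound)
  then have "\<bar>\<Sum>n<p ^ l. F n - F (n mod p ^ m)\<bar> \<le> real p ^ l * e"
    by (simp add: order_trans[OF sum_abs])
  with p show ?thesis unfolding diff by (simp add: abs_divide pos_divide_le_eq mult.commute)
qed

lemma riemann_sum_tendsto_haar_int: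
  assumes p: "p > 0" and g: "zp_ucont p g"
  shows "riemann_sum p g \<longlonglongrightarrow> haar_int p g"
proof -
  have "Cauchy (riemann_sum p g)"
  proof (rule CauchyI)
    fix e :: real assume "e > 0"
    then obtain m where m: "osc_le p m g (e/3)" using zp_ucontD[OF g, of "e/3"] by auto
    have "\<bar>riemann_sum p g a - riemann_sum p g b\<bar> < e" if "m \<le> a" "m \<le> b" for a b
      using riemann_sum_osc[OF p m that(1)] riemann_sum_osc[OF p m that(2)] \<open>e > 0\<close> by linarith
    then show "\<exists>M. \<forall>a\<ge>M. \<forall>b\<ge>M. norm (riemann_sum p g a - riemann_sum p g b) < e" by auto
  qed
  then show ?thesis
    unfolding haar_int_eq_lim by (simp add: Cauchy_convergent_iff convergent_LIMSEQ_iff)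
qed

lemma haar_int_diff_le:
  assumes p: "p > 0" and "zp_ucont p g1" "zp_ucont p g2"
    and C: "\<And>y. y \<in> Zp p \<Longrightarrow> \<bar>g1 y - g2 y\<bar> \<le> C"
  shows "\<bar>haar_int p g1 - haar_int p g2\<bar> \<le> C"
proof (rule LIMSEQ_le_const2)
  show "(\<lambda>l. \<bar>riemann_sum p g1 l - riemann_sum p g2 l\<bar>) \<longlonglongrightarrow> \<bar>haar_int p g1 - haar_int p g2\<bar>"
    using assms by (intro tendsto_intros riemann_sum_tendsto_haar_int)
  have "\<bar>riemann_sum p g1 l - riemann_sum p g2 l\<bar> \<le> C" for l
  proof -
    have "(\<Sum>n<p ^ l. \<bar>g1 (zp_of_int p (int n)) - g2 (zp_of_int p (int n))\<bar>) \<le> (\<Sum>n<p ^ l. C)"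
      by (intro sum_mono C zp_of_int_in_Zp[OF p])
    then have "\<bar>\<Sum>n<p ^ l. g1 (zp_of_int p (int n)) - g2 (zp_of_int p (int n))\<bar> \<le> real p ^ l * C"
      by (simp add: order_trans[OF sum_abs])
    with p show ?thesis
      by (simp add: riemann_sum_def abs_divide pos_divide_le_eq mult.commute sum_subtractf flip: diff_divide_distrib)
  qed
  then show "\<exists>N. \<forall>l\<ge>N. \<bar>riemann_sum p g1 l - riemann_sum p g2 l\<bar> \<le> C" by blast
qed

lemma zp_ucont_translate:
  assumes w: "zp_ucont p w" and x: "x \<in> Zp p"
  shows "zp_ucont p (\<lambda>y. w (zp_sub p x y))"
  unfolding zp_ucont_def
proof (intro allI impI)
  fix e :: real assume "e > 0"
  with w have "\<forall>\<^sub>F m in sequentially. osc_le p m w e" unfolding zp_ucont_def by blast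
  then show "\<forall>\<^sub>F m in sequentially. osc_le p m (\<lambda>y. w (zp_sub p x y)) e"
  proof eventually_elim
    case (elim m)
    show ?case unfolding osc_le_def
    proof (intro ballI impI)
      fix y y' assume "y \<in> Zp p" "y' \<in> Zp p" "y m = y' m"
      then show "\<bar>w (zp_sub p x y) - w (zp_sub p x y')\<bar> \<le> e"
        by (intro osc_leD[OF elim] zp_sub_in_Zp[OF x]) (simp_all add: zp_sub_def)
    qed
  qed
qed

lemma conv_diff_le:
  assumes w: "zp_ucont p w" and f: "zp_ucont p f" and g: "zp_ucont p g" and x: "x \<in> Zp p"
    and M: "\<And>z. z \<in> Zp p \<Longrightarrow> \<bar>w z\<bar> \<le> M" and c: "\<And>y. y \<in> Zp p \<Longrightarrow> \<bar>f y - g y\<bar> \<le> c"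
  shows "\<bar>conv p w f x - conv p w g x\<bar> \<le> M * c"
  unfolding conv_def
proof (rule haar_int_diff_le[OF Zp_pos[OF x]])
  show "zp_ucont p (\<lambda>y. w (zp_sub p x y) * f y)" "zp_ucont p (\<lambda>y. w (zp_sub p x y) * g y)"
    using zp_ucont_mult[OF zp_ucont_translate[OF w x]] f g by auto
  fix y assume y: "y \<in> Zp p"
  have "\<bar>w (zp_sub p x y) * f y - w (zp_sub p x y) * g y\<bar> = \<bar>w (zp_sub p x y)\<bar> * \<bar>f y - g y\<bar>"
    by (simp add: abs_mult flip: right_diff_distrib)
  also have "\<dots> \<le> M * c"
    using M[OF zp_sub_in_Zp[OF x y]] c[OF y] by (intro mult_mono) auto
  finally show "\<bar>w (zp_sub p x y) * f y - w (zp_sub p x y) * g y\<bar> \<le> M * c" .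
qed

lemma conv_ucont:
  assumes w: "zp_ucont p w" and f: "zp_ucont p f"
  shows "zp_ucont p (conv p w f)"
  unfolding zp_ucont_def
proof (intro allI impI)
  fix e :: real assume "e > 0"
  obtain M where M: "M \<ge> 0" "\<And>y. y \<in> Zp p \<Longrightarrow> \<bar>f y\<bar> \<le> M" using zp_ucont_bounded[OF f] by blast
  define \<eta> where "\<eta> = e / (M + 1)"
  have "\<eta> > 0" "\<eta> * M \<le> e" using \<open>e > 0\<close> M(1) by (simp_all add: \<eta>_def field_simps)
  with w have "\<forall>\<^sub>F m in sequentially. osc_le p m w \<eta>" unfolding zp_ucont_def by blast
  then show "\<forall>\<^sub>F m in sequentially. osc_le p m (conv p w f) e"
  proof eventually_elim
    case (elim m)
    show ?case unfolding osc_le_def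
    proof (intro ballI impI)
      fix x x' assume x: "x \<in> Zp p" "x' \<in> Zp p" "x m = x' m"
      have "\<bar>conv p w f x - conv p w f x'\<bar> \<le> \<eta> * M"
        unfolding conv_def
      proof (rule haar_int_diff_le[OF Zp_pos[OF x(1)]])
        show "zp_ucont p (\<lambda>y. w (zp_sub p x y) * f y)" "zp_ucont p (\<lambda>y. w (zp_sub p x' y) * f y)"
          using zp_ucont_mult[OF zp_ucont_translate[OF w] f] x by auto
        fix y assume y: "y \<in> Zp p"
        have "\<bar>w (zp_sub p x y) - w (zp_sub p x' y)\<bar> \<le> \<eta>"
          using elim zp_sub_in_Zp[OF x(1) y] zp_sub_in_Zp[OF x(2) y] x(3)
          unfolding osc_le_def by (simp add: zp_sub_def)
        then show "\<bar>w (zp_sub p x y) * f y - w (zp_sub p x' y) * f y\<bar> \<le> \<eta> * M"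
          using M(2)[OF y] \<open>\<eta> > 0\<close> by (simp add: abs_mult mult_mono flip: left_diff_distrib)
      qed
      with \<open>\<eta> * M \<le> e\<close> show "\<bar>conv p w f x - conv p w f x'\<bar> \<le> e" by linarith
    qed
  qed
qed

definition Hcomp :: "nat \<Rightarrow> (real \<Rightarrow> real) \<Rightarrow> zfun \<Rightarrow> zfun \<Rightarrow> zfun \<Rightarrow> zfun \<Rightarrow> zfun \<Rightarrow> zfun" where
  "Hcomp p S w1 w2 h f1 f2 = (\<lambda>x. S (conv p w1 f1 x - conv p w2 f2 x + h x))"

lemma Hop_eq:
  "Hop p SE SI wEE wEI wIE wII hE hI f s =
     (Hcomp p SE wEE wEI (hE s) (fst f) (snd f), Hcomp p SI wIE wII (hI s) (fst f) (snd f))"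
  by (simp add: Hop_def Hcomp_def)

lemma Hcomp_ucont:
  assumes "L-lipschitz_on UNIV S" "zp_ucont p w1" "zp_ucont p w2" "zp_ucont p h"
    "zp_ucont p f1" "zp_ucont p f2"
  shows "zp_ucont p (Hcomp p S w1 w2 h f1 f2)"
  unfolding Hcomp_def
  using assms by (intro zp_ucont_lipschitz_comp[OF assms(1)] zp_ucont_add zp_ucont_diff conv_ucont)

lemma Hcomp_diff_le:
  assumes S: "L-lipschitz_on UNIV S" and w: "zp_ucont p w1" "zp_ucont p w2"
    and M: "\<And>z. z \<in> Zp p \<Longrightarrow> \<bar>w1 z\<bar> \<le> M1" "\<And>z. z \<in> Zp p \<Longrightarrow> \<bar>w2 z\<bar> \<le> M2"
    and f: "zp_ucont p f1" "zp_ucont p f2" "zp_ucont p g1" "zp_ucont p g2"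
    and c: "\<And>x. x \<in> Zp p \<Longrightarrow> \<bar>f1 x - g1 x\<bar> \<le> c" "\<And>x. x \<in> Zp p \<Longrightarrow> \<bar>f2 x - g2 x\<bar> \<le> c"
    and y: "y \<in> Zp p"
  shows "\<bar>Hcomp p S w1 w2 h f1 f2 y - Hcomp p S w1 w2 h' g1 g2 y\<bar> \<le> L * ((M1 + M2) * c + \<bar>h y - h' y\<bar>)"
proof -
  have "\<bar>conv p w1 f1 y - conv p w1 g1 y\<bar> \<le> M1 * c"
    by (rule conv_diff_le[OF w(1) f(1,3) y]) (use M(1) c(1) in auto)
  moreover have "\<bar>conv p w2 f2 y - conv p w2 g2 y\<bar> \<le> M2 * c"
    by (rule conv_diff_le[OF w(2) f(2,4) y]) (use M(2) c(2) in auto)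
  ultimately have "\<bar>(conv p w1 f1 y - conv p w2 f2 y + h y) - (conv p w1 g1 y - conv p w2 g2 y + h' y)\<bar>
      \<le> (M1 + M2) * c + \<bar>h y - h' y\<bar>"
    by (simp add: algebra_simps)
  then show ?thesis
    unfolding Hcomp_def using lipschitz_on_nonneg[OF S] lipschitz_on_UNIV_abs_le[OF S]
    by (meson mult_left_mono order_trans)
qed

lemma Hcomp_continuous_on_uniformly:
  assumes S: "L-lipschitz_on UNIV S" and w: "zp_ucont p w1" "zp_ucont p w2"
    and f: "\<And>t. t \<in> I \<Longrightarrow> zp_ucont p (f1 t) \<and> zp_ucont p (f2 t)"
    and cont: "continuous_on_uniformly (Zp p) I f1" "continuous_on_uniformly (Zp p) I f2"
      "continuous_on_uniformly (Zp p) I h"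
  shows "continuous_on_uniformly (Zp p) I (\<lambda>t. Hcomp p S w1 w2 (h t) (f1 t) (f2 t))"
  unfolding continuous_on_uniformly_def
proof (intro ballI allI impI)
  fix t e assume t: "t \<in> I" and "(e::real) > 0"
  obtain M1 M2 where M: "M1 \<ge> 0" "\<And>z. z \<in> Zp p \<Longrightarrow> \<bar>w1 z\<bar> \<le> M1"
    "M2 \<ge> 0" "\<And>z. z \<in> Zp p \<Longrightarrow> \<bar>w2 z\<bar> \<le> M2"
    using zp_ucont_bounded[OF w(1)] zp_ucont_bounded[OF w(2)] by metis
  have L: "L \<ge> 0" by (rule lipschitz_on_nonneg[OF S])
  define Q where "Q = L * (M1 + M2 + 1) + 1"
  define \<eta> where "\<eta> = e / Q"
  have "Q > 0" using L M(1,3) by (simp add: Q_def add_nonneg_pos)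
  then have "\<eta> > 0" using \<open>e > 0\<close> by (simp add: \<eta>_def)
  have "L * ((M1 + M2) * \<eta> + \<eta>) = (Q - 1) * \<eta>" by (simp add: Q_def algebra_simps)
  also have "\<dots> \<le> Q * \<eta>" using \<open>\<eta> > 0\<close> by (simp add: algebra_simps)
  also have "\<dots> = e" using \<open>Q > 0\<close> by (simp add: \<eta>_def)
  finally have "L * ((M1 + M2) * \<eta> + \<eta>) \<le> e" .
  have "\<forall>\<^sub>F s in at t within I. \<forall>x\<in>Zp p. \<bar>f1 s x - f1 t x\<bar> \<le> \<eta>"
    "\<forall>\<^sub>F s in at t within I. \<forall>x\<in>Zp p. \<bar>f2 s x - f2 t x\<bar> \<le> \<eta>"
    "\<forall>\<^sub>F s in at t within I. \<forall>x\<in>Zp p. \<bar>h s x - h t x\<bar> \<le> \<eta>"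
    using cont t \<open>\<eta> > 0\<close> unfolding continuous_on_uniformly_def by blast+
  with eventually_at_within_mem[of I t] show "\<forall>\<^sub>F s in at t within I. \<forall>x\<in>Zp p.
      \<bar>Hcomp p S w1 w2 (h s) (f1 s) (f2 s) x - Hcomp p S w1 w2 (h t) (f1 t) (f2 t) x\<bar> \<le> e"
  proof eventually_elim
    case (elim s)
    show ?case
    proof
      fix x assume x: "x \<in> Zp p"
      have "\<bar>Hcomp p S w1 w2 (h s) (f1 s) (f2 s) x - Hcomp p S w1 w2 (h t) (f1 t) (f2 t) x\<bar>
          \<le> L * ((M1 + M2) * \<eta> + \<bar>h s x - h t x\<bar>)"
        using elim f[OF t] f[of s] x by (intro Hcomp_diff_le[OF S w M(2,4)]) auto
      also have "\<dots> \<le> L * ((M1 + M2) * \<eta> + \<eta>)"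
        using elim x L by (intro mult_left_mono) auto
      finally show "\<bar>Hcomp p S w1 w2 (h s) (f1 s) (f2 s) x - Hcomp p S w1 w2 (h t) (f1 t) (f2 t) x\<bar> \<le> e"
        using \<open>L * ((M1 + M2) * \<eta> + \<eta>) \<le> e\<close> by linarith
    qed
  qed
qed

lemma Hcomp_osc_eventually:
  assumes p: "p > 1" and S: "L-lipschitz_on UNIV S" and w: "zp_continuous p w1" "zp_continuous p w2"
    and h: "cont_time_fun p h"
    and fg: "\<And>t. t \<ge> 0 \<Longrightarrow> zp_ucont p (f t) \<and> zp_ucont p (g t)"
    and cont: "continuous_on_uniformly (Zp p) {0..} f" "continuous_on_uniformly (Zp p) {0..} g"
    and "e > 0"
  shows "\<forall>\<^sub>F l in sequentially. \<forall>t\<in>{0..T}. osc_le p l (Hcomp p S w1 w2 (h t) (f t) (g t)) e"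
proof -
  have uc: "zp_ucont p w1" "zp_ucont p w2" using zp_continuous_imp_ucont[OF p] w by auto
  have "continuous_on_uniformly (Zp p) {0..} (\<lambda>t. Hcomp p S w1 w2 (h t) (f t) (g t))"
    using fg by (intro Hcomp_continuous_on_uniformly[OF S uc _ cont cont_time_fun_continuous_on_uniformly[OF p h]])
      auto
  then have tcont: "continuous_on_uniformly (Zp p) {0..T} (\<lambda>t. Hcomp p S w1 w2 (h t) (f t) (g t))"
    by (rule continuous_on_uniformly_subset) auto
  have "zp_continuous p (Hcomp p S w1 w2 (h t) (f t) (g t))" if "t \<in> {0..T}" for t
    using fg[of t] that cont_time_fun_ucont[OF p h, of t]
    by (intro zp_ucont_imp_continuous[OF p] Hcomp_ucont[OF S uc]) auto
  from osc_le_uniform_on_interval[OF p this tcont \<open>e > 0\<close>]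
  obtain m where "\<forall>t\<in>{0..T}. osc_le p m (Hcomp p S w1 w2 (h t) (f t) (g t)) e" ..
  then show ?thesis unfolding eventually_sequentially by (meson osc_le_mono)
qed

(* X = C(Z_p)^2 viewed as functions on Z_p \<times> bool, so that its norm is a single supremum. *)
definition xel_at :: "xel \<Rightarrow> zp \<times> bool \<Rightarrow> real" where
  "xel_at q a = (if snd a then fst q (fst a) else snd q (fst a))"

lemma xel_at_simps [simp]: "xel_at q (x, True) = fst q x" "xel_at q (x, False) = snd q x"
  by (simp_all add: xel_at_def)

lemma xel_at_Xsub [simp]: "xel_at (Xsub f g) a = xel_at f a - xel_at g a"
  by (simp add: xel_at_def Xsub_def)

lemma Xsub_components [simp]:
  "fst (Xsub f g) = (\<lambda>x. fst f x - fst g x)" "snd (Xsub f g) = (\<lambda>x. snd f x - snd g x)"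
  by (simp_all add: Xsub_def)

lemma xel_at_Pl:
  "p > 1 \<Longrightarrow> x \<in> Zp p \<Longrightarrow> xel_at (Pl p l q) (x, b) = xel_at q (zp_of_int p (x l), b)"
  by (simp add: xel_at_def Pl_def Pl1_eq)

lemma in_X_ucont: "p > 1 \<Longrightarrow> in_X p q \<Longrightarrow> zp_ucont p (fst q) \<and> zp_ucont p (snd q)"
  unfolding in_X_def by (simp add: zp_continuous_imp_ucont)

lemma abs_xel_at_le_Xnorm:
  "zp_ucont p (fst q) \<Longrightarrow> zp_ucont p (snd q) \<Longrightarrow> a \<in> Zp p \<times> UNIV \<Longrightarrow> \<bar>xel_at q a\<bar> \<le> Xnorm p q"
  unfolding xel_at_def Xnorm_def using abs_le_supn by fastforce

lemma Xnorm_le: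
  assumes "p > 0" "\<And>a. a \<in> Zp p \<times> UNIV \<Longrightarrow> \<bar>xel_at q a\<bar> \<le> c"
  shows "Xnorm p q \<le> c"
proof -
  have "supn p (fst q) \<le> c" "supn p (snd q) \<le> c"
    using assms(2)[of "(_, True)"] assms(2)[of "(_, False)"] by (auto intro: supn_le[OF assms(1)])
  then show ?thesis by (simp add: Xnorm_def)
qed

lemma abs_xel_at_diff_le_Xnorm:
  assumes "p > 1" "in_X p f" "in_X p g" "a \<in> Zp p \<times> UNIV"
  shows "\<bar>xel_at f a - xel_at g a\<bar> \<le> Xnorm p (Xsub f g)"
  using abs_xel_at_le_Xnorm[of p "Xsub f g" a] in_X_ucont[OF assms(1,2)] in_X_ucont[OF assms(1,3)] assms(4)
  by (simp add: zp_ucont_diff)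

lemma Pl_approx:
  assumes p: "p > 1" and osc: "osc_le p l (fst q) e" "osc_le p l (snd q) e"
    and a: "a \<in> Zp p \<times> UNIV"
  shows "\<bar>xel_at (Pl p l q) a - xel_at q a\<bar> \<le> e"
proof -
  obtain x b where x: "a = (x, b)" "x \<in> Zp p" using a by auto
  define y where "y = zp_of_int p (x l)"
  have y: "y \<in> Zp p" "y l = x l"
    using zp_of_int_in_Zp[OF Zp_pos[OF x(2)]] zp_of_int_level[OF x(2)] by (auto simp: y_def)
  have "\<bar>xel_at q (y, b) - xel_at q (x, b)\<bar> \<le> e"
    using osc y x(2) by (cases b) (auto intro: osc_leD)
  then show ?thesis using xel_at_Pl[OF p x(2)] x(1) by (simp add: y_def)
qed

lemma in_X_osc_eventually:
  assumes "p > 1" "in_X p q" "e > 0"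
  shows "\<forall>\<^sub>F l in sequentially. osc_le p l (fst q) e \<and> osc_le p l (snd q) e"
  using in_X_ucont[OF assms(1,2)] assms(3) unfolding zp_ucont_def by (simp add: eventually_conj)

lemma has_derivative_uniformly_xel_at:
  assumes p: "p > 1" and X: "\<And>t. t \<ge> 0 \<Longrightarrow> in_X p (u t)" and X': "\<And>t. t \<ge> 0 \<Longrightarrow> in_X p (u' t)"
    and quot: "\<And>t. t \<ge> 0 \<Longrightarrow>
      ((\<lambda>s. Xnorm p (Xsub ((\<lambda>x. (fst (u s) x - fst (u t) x) / (s - t)),
                           (\<lambda>x. (snd (u s) x - snd (u t) x) / (s - t))) (u' t))) \<longlongrightarrow> 0)
        (at t within {0..})"
  shows "has_derivative_uniformly (Zp p \<times> UNIV) {0..} (\<lambda>t. xel_at (u t)) (\<lambda>t. xel_at (u' t))"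
  unfolding has_derivative_uniformly_def
proof (intro ballI allI impI)
  fix t e :: real assume "t \<in> {0..}" and "e > 0"
  then have t: "t \<ge> 0" by simp
  define dq where "dq s = ((\<lambda>x. (fst (u s) x - fst (u t) x) / (s - t)),
                          (\<lambda>x. (snd (u s) x - snd (u t) x) / (s - t)))" for s
  from order_tendstoD(2)[OF quot[OF t, folded dq_def] \<open>e > 0\<close>] eventually_at_within_mem[of "{0..}" t]
  have "\<forall>\<^sub>F s in at t within {0..}. s \<ge> 0 \<and> s \<noteq> t \<and> Xnorm p (Xsub (dq s) (u' t)) < e"
    by eventually_elim auto
  then show "\<forall>\<^sub>F s in at t within {0..}. \<forall>a\<in>Zp p \<times> UNIV.
      \<bar>xel_at (u s) a - xel_at (u t) a - (s - t) * xel_at (u' t) a\<bar> \<le> e * \<bar>s - t\<bar>"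
  proof eventually_elim
    case (elim s)
    show ?case
    proof
      fix a :: "zp \<times> bool" assume a: "a \<in> Zp p \<times> UNIV"
      have "zp_ucont p (fst (Xsub (dq s) (u' t))) \<and> zp_ucont p (snd (Xsub (dq s) (u' t)))"
        using in_X_ucont[OF p X] in_X_ucont[OF p X'] elim t
        by (simp add: dq_def divide_inverse zp_ucont_diff zp_ucont_cmult mult.commute)
      with a elim have "\<bar>xel_at (dq s) a - xel_at (u' t) a\<bar> \<le> e"
        using abs_xel_at_le_Xnorm by fastforce
      moreover have "xel_at (u s) a - xel_at (u t) a - (s - t) * xel_at (u' t) a
          = (s - t) * (xel_at (dq s) a - xel_at (u' t) a)"
        using elim by (simp add: xel_at_def dq_def field_simps)
      ultimately show "\<bar>xel_at (u s) a - xel_at (u t) a - (s - t) * xel_at (u' t) a\<bar> \<le> e * \<bar>s - t\<bar>"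
        by (simp add: abs_mult mult.commute[of _ "\<bar>s - t\<bar>"] mult_left_mono)
    qed
  qed
qed

lemma is_C1_solutionD:
  assumes p: "p > 1" and \<tau>: "\<tau> > 0" and sol: "is_C1_solution p \<tau> G u0 u"
  obtains u' where "\<And>t. t \<ge> 0 \<Longrightarrow> in_X p (u t)" "\<And>t. t \<ge> 0 \<Longrightarrow> in_X p (u' t)"
    "has_derivative_uniformly (Zp p \<times> UNIV) {0..} (\<lambda>t. xel_at (u t)) (\<lambda>t. xel_at (u' t))"
    "\<And>t a. t \<ge> 0 \<Longrightarrow> a \<in> Zp p \<times> UNIV \<Longrightarrow> \<tau> * xel_at (u' t) a = xel_at (G (u t) t) a - xel_at (u t) a"
    "\<And>a. a \<in> Zp p \<times> UNIV \<Longrightarrow> xel_at (u 0) a = xel_at u0 a"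
proof -
  have X: "\<And>t. t \<ge> 0 \<Longrightarrow> in_X p (u t)"
    and init: "\<And>x. x \<in> Zp p \<Longrightarrow> fst (u 0) x = fst u0 x \<and> snd (u 0) x = snd u0 x"
    using sol unfolding is_C1_solution_def by blast+
  from sol obtain u' where X': "\<forall>t\<ge>0. in_X p (u' t)"
    and quot: "\<forall>t\<ge>0. ((\<lambda>s. Xnorm p (Xsub ((\<lambda>x. (fst (u s) x - fst (u t) x) / (s - t)),
        (\<lambda>x. (snd (u s) x - snd (u t) x) / (s - t))) (u' t))) \<longlongrightarrow> 0) (at t within {0..})"
    and ode: "\<forall>t\<ge>0. \<forall>x\<in>Zp p.
        fst (u' t) x + fst (u t) x / \<tau> = fst (G (u t) t) x / \<tau> \<and>
        snd (u' t) x + snd (u t) x / \<tau> = snd (G (u t) t) x / \<tau>"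
    unfolding is_C1_solution_def by blast
  have "\<tau> * xel_at (u' t) a = xel_at (G (u t) t) a - xel_at (u t) a"
    if "t \<ge> 0" "a \<in> Zp p \<times> UNIV" for t a
    using ode that \<tau> by (auto simp: xel_at_def field_simps)
  moreover have "xel_at (u 0) a = xel_at u0 a" if "a \<in> Zp p \<times> UNIV" for a
    using init[of "fst a"] that by (auto simp: xel_at_def)
  ultimately show ?thesis
    using that[OF X X'[rule_format] has_derivative_uniformly_xel_at[OF p X X'[rule_format] quot[rule_format]]]
    by blast
qed

lemma is_C1_solution_continuous:
  assumes p: "p > 1" and \<tau>: "\<tau> > 0" and sol: "is_C1_solution p \<tau> G u0 u"
  shows "continuous_on_uniformly (Zp p \<times> UNIV) {0..} (\<lambda>t. xel_at (u t))"
proof -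
  obtain u' where u': "\<And>t. t \<ge> 0 \<Longrightarrow> in_X p (u' t)"
    and der: "has_derivative_uniformly (Zp p \<times> UNIV) {0..} (\<lambda>t. xel_at (u t)) (\<lambda>t. xel_at (u' t))"
    using is_C1_solutionD[OF p \<tau> sol] by metis
  show ?thesis
  proof (rule has_derivative_uniformly_imp_continuous[OF der])
    fix t :: real assume "t \<in> {0..}"
    then show "\<exists>M. \<forall>a\<in>Zp p \<times> UNIV. \<bar>xel_at (u' t) a\<bar> \<le> M"
      using abs_xel_at_le_Xnorm in_X_ucont[OF p u'] by fastforce
  qed
qed

lemma continuous_on_uniformly_components:
  assumes "continuous_on_uniformly (Zp p \<times> UNIV) I (\<lambda>t. xel_at (u t))"
  shows "continuous_on_uniformly (Zp p) I (\<lambda>t. fst (u t))"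
    and "continuous_on_uniformly (Zp p) I (\<lambda>t. snd (u t))"
proof -
  have "\<forall>\<^sub>F s in at t within I. \<forall>x\<in>Zp p. \<bar>fst (u s) x - fst (u t) x\<bar> \<le> e \<and> \<bar>snd (u s) x - snd (u t) x\<bar> \<le> e"
    if "t \<in> I" "e > 0" for t e
  proof -
    have "\<forall>\<^sub>F s in at t within I. \<forall>a\<in>Zp p \<times> UNIV. \<bar>xel_at (u s) a - xel_at (u t) a\<bar> \<le> e"
      using assms that unfolding continuous_on_uniformly_def by blast
    then show ?thesis
    proof eventually_elim
      case (elim s)
      show ?case
      proof
        fix x assume "x \<in> Zp p"
        with elim show "\<bar>fst (u s) x - fst (u t) x\<bar> \<le> e \<and> \<bar>snd (u s) x - snd (u t) x\<bar> \<le> e"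
          using bspec[OF elim, of "(x, True)"] bspec[OF elim, of "(x, False)"] by simp
      qed
    qed
  qed
  note ev = this
  show "continuous_on_uniformly (Zp p) I (\<lambda>t. fst (u t))"
    unfolding continuous_on_uniformly_def
  proof (intro ballI allI impI)
    fix t e :: real assume "t \<in> I" "e > 0"
    from ev[OF this] show "\<forall>\<^sub>F s in at t within I. \<forall>x\<in>Zp p. \<bar>fst (u s) x - fst (u t) x\<bar> \<le> e"
      by eventually_elim auto
  qed
  show "continuous_on_uniformly (Zp p) I (\<lambda>t. snd (u t))"
    unfolding continuous_on_uniformly_def
  proof (intro ballI allI impI)
    fix t e :: real assume "t \<in> I" "e > 0"
    from ev[OF this] show "\<forall>\<^sub>F s in at t within I. \<forall>x\<in>Zp p. \<bar>snd (u s) x - snd (u t) x\<bar> \<le> e"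
      by eventually_elim auto
  qed
qed

section \<open>A comparison principle for the supremum norm\<close>

lemma continuous_on_sup:
  fixes D :: "real \<Rightarrow> 'a \<Rightarrow> real" and \<phi> :: "real \<Rightarrow> real"
  assumes ge: "\<And>t a. t \<in> I \<Longrightarrow> a \<in> A \<Longrightarrow> \<bar>D t a\<bar> \<le> \<phi> t"
    and least: "\<And>t c. t \<in> I \<Longrightarrow> (\<And>a. a \<in> A \<Longrightarrow> \<bar>D t a\<bar> \<le> c) \<Longrightarrow> \<phi> t \<le> c"
    and cont: "continuous_on_uniformly A I D"
  shows "continuous_on I \<phi>"
  unfolding continuous_on_def
proof (intro ballI tendstoI)
  fix t e assume t: "t \<in> I" and "(e::real) > 0"
  then have "e/2 > 0" by simp
  with cont t have "\<forall>\<^sub>F s in at t within I. \<forall>a\<in>A. \<bar>D s a - D t a\<bar> \<le> e/2"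
    unfolding continuous_on_uniformly_def by blast
  with eventually_at_within_mem[of I t]
  show "\<forall>\<^sub>F s in at t within I. dist (\<phi> s) (\<phi> t) < e"
  proof eventually_elim
    case (elim s)
    have "\<phi> s \<le> \<phi> t + e/2"
    proof (rule least)
      fix a assume a: "a \<in> A"
      with elim have "\<bar>D s a - D t a\<bar> \<le> e/2" by blast
      with ge[OF t a] show "\<bar>D s a\<bar> \<le> \<phi> t + e/2" by arith
    qed (use elim in simp)
    moreover have "\<phi> t \<le> \<phi> s + e/2"
    proof (rule least[OF t])
      fix a assume a: "a \<in> A"
      with elim have "\<bar>D s a - D t a\<bar> \<le> e/2" "\<bar>D s a\<bar> \<le> \<phi> s" using ge[of s a] by blast+
      then show "\<bar>D t a\<bar> \<le> \<phi> s + e/2" by arith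
    qed
    ultimately show ?case using \<open>e > 0\<close> by (simp add: dist_real_def abs_le_iff)
  qed
qed

lemma first_crossing_time:
  fixes \<phi> B :: "real \<Rightarrow> real"
  assumes cont: "continuous_on {0..T} \<phi>" "continuous_on {0..T} B"
    and start: "\<phi> 0 < B 0" and t0: "t0 \<in> {0..T}" "B t0 \<le> \<phi> t0"
  obtains ts where "ts \<in> {0<..T}" "\<phi> ts = B ts" "\<And>s. s \<in> {0..<ts} \<Longrightarrow> \<phi> s < B s"
proof -
  define S where "S = {0..T} \<inter> (\<lambda>t. \<phi> t - B t) -` {0..}"
  have "closed S"
    unfolding S_def using cont by (intro continuous_closed_preimage continuous_intros) auto
  moreover have "S \<noteq> {}" "bdd_below S" using t0 by (auto simp: S_def intro: bdd_belowI[of _ 0])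
  ultimately have ts: "Inf S \<in> S" by (rule closed_contains_Inf[rotated -1])
  have below: "\<phi> s < B s" if "s \<in> {0..<Inf S}" for s
  proof (rule ccontr)
    assume "\<not> \<phi> s < B s"
    with that ts have "s \<in> S" by (auto simp: S_def)
    then show False using cInf_lower[OF _ \<open>bdd_below S\<close>] that by force
  qed
  have "Inf S \<noteq> 0" using ts start by (auto simp: S_def)
  with ts have pos: "Inf S \<in> {0<..T}" by (auto simp: S_def)
  have "continuous_on {0..Inf S} (\<lambda>t. \<phi> t - B t)"
    using cont pos by (intro continuous_intros) (auto elim!: continuous_on_subset)
  then obtain x where x: "0 \<le> x" "x \<le> Inf S" "\<phi> x - B x = 0"
    using IVT'[of "\<lambda>t. \<phi> t - B t" 0 0 "Inf S"] start ts by (auto simp: S_def)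
  then have "x \<in> S" using pos by (auto simp: S_def)
  then have "x = Inf S" using x(2) cInf_lower[OF _ \<open>bdd_below S\<close>] by force
  with x(3) have "\<phi> (Inf S) = B (Inf S)" by simp
  with pos below show ?thesis using that by blast
qed

(* The backward Euler form of tau D' = G - D, passed to the supremum phi of |D|. *)
lemma backward_difference_le:
  fixes D D' G :: "real \<Rightarrow> 'a \<Rightarrow> real" and \<phi> :: "real \<Rightarrow> real"
  assumes \<tau>: "\<tau> > 0"
    and ge: "\<And>t a. t \<in> {0..T} \<Longrightarrow> a \<in> A \<Longrightarrow> \<bar>D t a\<bar> \<le> \<phi> t"
    and least: "\<And>t c. t \<in> {0..T} \<Longrightarrow> (\<And>a. a \<in> A \<Longrightarrow> \<bar>D t a\<bar> \<le> c) \<Longrightarrow> \<phi> t \<le> c"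
    and der: "has_derivative_uniformly A {0..T} D D'"
    and ode: "\<And>a. a \<in> A \<Longrightarrow> \<tau> * D' t a = G t a - D t a"
    and G: "\<And>a. a \<in> A \<Longrightarrow> \<bar>G t a\<bar> \<le> g"
    and t: "t \<in> {0<..T}" and "e > 0"
  shows "\<forall>\<^sub>F h in at_right 0. \<phi> t * (1 + h / \<tau>) \<le> \<phi> (t - h) + h * g / \<tau> + e * h"
proof -
  have "t \<in> {0..T}" using t by simp
  from der[unfolded has_derivative_uniformly_def, rule_format, OF this \<open>e > 0\<close>, unfolded eventually_at]
  obtain d where d: "d > 0" "\<And>s a. s \<in> {0..T} \<Longrightarrow> s \<noteq> t \<Longrightarrow> dist s t < d \<Longrightarrow> a \<in> A \<Longrightarrow>
      \<bar>D s a - D t a - (s - t) * D' t a\<bar> \<le> e * \<bar>s - t\<bar>"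
    by blast
  have "\<phi> t * (1 + h / \<tau>) \<le> \<phi> (t - h) + h * g / \<tau> + e * h" if h: "0 < h" "h < min d t" for h
  proof -
    have s: "t - h \<in> {0..T}" using t h by auto
    have pos: "1 + h / \<tau> > 0" using h \<tau> by (intro add_pos_pos) auto
    have "\<phi> t \<le> (\<phi> (t - h) + h * g / \<tau> + e * h) / (1 + h / \<tau>)"
    proof (rule least)
      fix a assume a: "a \<in> A"
      define r where "r = D (t - h) a - D t a + h * D' t a"
      have "\<bar>r\<bar> \<le> e * h" using d(2)[OF s _ _ a] h by (simp add: r_def dist_real_def)
      have D': "D' t a = (G t a - D t a) / \<tau>" using ode[OF a] \<tau> by (simp add: field_simps)
      have eq: "D t a * (1 + h / \<tau>) = D (t - h) a + h * G t a / \<tau> - r"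
        unfolding r_def D' using \<tau> by (simp add: field_simps)
      have "\<bar>D t a\<bar> * (1 + h / \<tau>) = \<bar>D t a * (1 + h / \<tau>)\<bar>"
        using pos by (simp only: abs_mult abs_of_pos)
      also have "\<dots> = \<bar>D (t - h) a + h * G t a / \<tau> - r\<bar>" by (simp only: eq)
      also have "\<dots> \<le> \<bar>D (t - h) a + h * G t a / \<tau>\<bar> + \<bar>r\<bar>" by (rule abs_triangle_ineq4)
      also have "\<dots> \<le> \<bar>D (t - h) a\<bar> + \<bar>h * G t a / \<tau>\<bar> + \<bar>r\<bar>"
        by (rule add_right_mono[OF abs_triangle_ineq])
      also have "\<dots> \<le> \<phi> (t - h) + h * g / \<tau> + e * h"
      proof (intro add_mono)
        show "\<bar>h * G t a / \<tau>\<bar> \<le> h * g / \<tau>"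
          using G[OF a] h \<tau> by (simp add: abs_mult divide_right_mono mult_left_mono)
      qed (fact ge[OF s a], fact)
      finally show "\<bar>D t a\<bar> \<le> (\<phi> (t - h) + h * g / \<tau> + e * h) / (1 + h / \<tau>)"
        using pos by (simp add: pos_le_divide_eq)
    qed (use t in auto)
    with pos show ?thesis by (simp add: pos_le_divide_eq)
  qed
  moreover have "min d t > 0" using d(1) t by simp
  ultimately show ?thesis unfolding eventually_at_right_field by blast
qed

lemma exp_minus_le_quadratic:
  fixes y :: real
  assumes "y \<ge> 0" shows "exp (- y) \<le> 1 - y + y\<^sup>2"
proof -
  have "exp (- y) \<le> 1 / (1 + y)"
    using exp_ge_add_one_self[of y] assms by (simp add: exp_minus field_simps)
  also have "\<dots> \<le> 1 - y + y\<^sup>2"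
    using assms by (simp add: field_simps power2_eq_square)
  finally show ?thesis .
qed

(* Applied at the first time where phi touches the barrier beta e^(K t / tau). *)
lemma touching_point_le:
  fixes \<beta> :: real
  assumes \<tau>: "\<tau> > 0" and K: "K \<ge> 0" and "\<beta> > 0"
    and step: "\<And>e. e > 0 \<Longrightarrow> \<forall>\<^sub>F h in at_right 0.
      \<beta> * (1 + h / \<tau>) \<le> \<beta> * exp (- (K * h / \<tau>)) + h * (K * \<beta> + \<epsilon>) / \<tau> + e * h"
  shows "\<beta> \<le> \<epsilon>"
proof -
  have "\<beta> / \<tau> \<le> \<epsilon> / \<tau> + e" if "e > 0" for e
  proof -
    from step[OF that] eventually_at_right_less[of 0]
    have "\<forall>\<^sub>F h in at_right 0. \<beta> / \<tau> \<le> \<beta> * K\<^sup>2 * h / \<tau>\<^sup>2 + \<epsilon> / \<tau> + e"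
    proof eventually_elim
      case (elim h)
      have "\<beta> * exp (- (K * h / \<tau>)) \<le> \<beta> * (1 - K * h / \<tau> + (K * h / \<tau>)\<^sup>2)"
        using exp_minus_le_quadratic[of "K * h / \<tau>"] \<open>\<beta> > 0\<close> K \<tau> elim by simp
      with elim(1) have "\<beta> * (1 + h / \<tau>) \<le> \<beta> * (1 - K * h / \<tau> + (K * h / \<tau>)\<^sup>2) + h * (K * \<beta> + \<epsilon>) / \<tau> + e * h"
        by linarith
      moreover have "\<beta> * (1 + h / \<tau>) - (\<beta> * (1 - K * h / \<tau> + (K * h / \<tau>)\<^sup>2) + h * (K * \<beta> + \<epsilon>) / \<tau> + e * h)
          = h * (\<beta> / \<tau>) - h * (\<beta> * K\<^sup>2 * h / \<tau>\<^sup>2 + \<epsilon> / \<tau> + e)"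
        using \<tau> by (simp add: field_simps power2_eq_square)
      ultimately have "h * (\<beta> / \<tau>) \<le> h * (\<beta> * K\<^sup>2 * h / \<tau>\<^sup>2 + \<epsilon> / \<tau> + e)" by linarith
      then show ?case by (rule mult_left_le_imp_le) (use elim in simp)
    qed
    moreover have "((\<lambda>h. \<beta> * K\<^sup>2 * h / \<tau>\<^sup>2 + \<epsilon> / \<tau> + e) \<longlongrightarrow> \<epsilon> / \<tau> + e) (at_right 0)"
      using \<tau> by (auto intro!: tendsto_eq_intros)
    ultimately show ?thesis
      by (intro tendsto_lowerbound[of _ _ "at_right (0::real)"]) (simp_all add: trivial_limit_at_right_real)
  qed
  then have "\<beta> / \<tau> \<le> \<epsilon> / \<tau>" by (rule field_le_epsilon)
  then show "\<beta> \<le> \<epsilon>" using \<tau> by (simp add: divide_le_cancel)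
qed

lemma sup_growth_bound:
  fixes D D' G :: "real \<Rightarrow> 'a \<Rightarrow> real" and \<phi> :: "real \<Rightarrow> real"
  assumes \<tau>: "\<tau> > 0" and K: "K \<ge> 0"
    and ge: "\<And>t a. t \<in> {0..T} \<Longrightarrow> a \<in> A \<Longrightarrow> \<bar>D t a\<bar> \<le> \<phi> t"
    and least: "\<And>t c. t \<in> {0..T} \<Longrightarrow> (\<And>a. a \<in> A \<Longrightarrow> \<bar>D t a\<bar> \<le> c) \<Longrightarrow> \<phi> t \<le> c"
    and cont: "continuous_on_uniformly A {0..T} D"
    and der: "has_derivative_uniformly A {0..T} D D'"
    and ode: "\<And>t a. t \<in> {0..T} \<Longrightarrow> a \<in> A \<Longrightarrow> \<tau> * D' t a = G t a - D t a"
    and forcing: "\<And>t a. t \<in> {0..T} \<Longrightarrow> a \<in> A \<Longrightarrow> \<bar>G t a\<bar> \<le> K * \<phi> t + \<epsilon>"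
    and start: "\<phi> 0 < \<delta>" and "\<epsilon> < \<delta>"
    and t: "t \<in> {0..T}"
  shows "\<phi> t < \<delta> * exp (K * t / \<tau>)"
proof (rule ccontr)
  define B where "B t = \<delta> * exp (K * t / \<tau>)" for t
  assume "\<not> \<phi> t < \<delta> * exp (K * t / \<tau>)"
  then have "B t \<le> \<phi> t" by (simp add: B_def)
  have "continuous_on {0..T} \<phi>" by (rule continuous_on_sup[OF ge least cont])
  moreover have "continuous_on {0..T} B" unfolding B_def using \<tau> by (intro continuous_intros) auto
  moreover have "\<phi> 0 < B 0" using start by (simp add: B_def)
  ultimately obtain ts where ts: "ts \<in> {0<..T}" "\<phi> ts = B ts"
    and below: "\<And>s. s \<in> {0..<ts} \<Longrightarrow> \<phi> s < B s"
    using first_crossing_time t \<open>B t \<le> \<phi> t\<close> by metis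
  have "0 \<in> {0..T}" using t by simp
  have "0 \<le> \<phi> 0"
  proof (cases "A = {}")
    case True
    then show ?thesis using least[OF \<open>0 \<in> {0..T}\<close>, of "\<phi> 0 - 1"] by simp
  next
    case False
    then obtain a where "a \<in> A" by blast
    from ge[OF \<open>0 \<in> {0..T}\<close> this] show ?thesis by linarith
  qed
  define \<beta> where "\<beta> = B ts"
  have "\<delta> \<le> \<beta>" "\<beta> > 0"
    using start \<open>0 \<le> \<phi> 0\<close> K \<tau> ts(1) by (simp_all add: \<beta>_def B_def)
  have ts0: "ts \<in> {0..T}" using ts(1) by simp
  have "\<beta> \<le> \<epsilon>"
  proof (rule touching_point_le[OF \<tau> K \<open>\<beta> > 0\<close>])
    fix e :: real assume "e > 0"
    have "\<forall>\<^sub>F h in at_right 0. \<phi> ts * (1 + h / \<tau>) \<le> \<phi> (ts - h) + h * (K * \<beta> + \<epsilon>) / \<tau> + e * h"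
    proof (rule backward_difference_le[where t = ts and G = G, OF \<tau> ge least der])
      show "\<And>a. a \<in> A \<Longrightarrow> \<tau> * D' ts a = G ts a - D ts a" by (rule ode[OF ts0])
      show "\<And>a. a \<in> A \<Longrightarrow> \<bar>G ts a\<bar> \<le> K * \<beta> + \<epsilon>" using forcing[OF ts0] ts(2) by (simp add: \<beta>_def)
    qed (use ts(1) \<open>e > 0\<close> in auto)
    moreover have "\<forall>\<^sub>F h in at_right 0. 0 < h \<and> h < ts"
      using ts(1) by (intro eventually_conj eventually_at_right_less order_tendstoD(2)[OF tendsto_ident_at]) auto
    ultimately show "\<forall>\<^sub>F h in at_right 0.
        \<beta> * (1 + h / \<tau>) \<le> \<beta> * exp (- (K * h / \<tau>)) + h * (K * \<beta> + \<epsilon>) / \<tau> + e * h"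
    proof eventually_elim
      case (elim h)
      have "B (ts - h) = \<beta> * exp (- (K * h / \<tau>))"
        by (simp add: B_def \<beta>_def diff_divide_distrib right_diff_distrib exp_diff exp_minus field_simps)
      with elim below[of "ts - h"] ts(2) show ?case by (simp add: \<beta>_def)
    qed
  qed
  with \<open>\<delta> \<le> \<beta>\<close> \<open>\<epsilon> < \<delta>\<close> show False by linarith
qed

section \<open>Convergence of the discretization\<close>

definition X_lipschitz :: "nat \<Rightarrow> real \<Rightarrow> (xel \<Rightarrow> real \<Rightarrow> xel) \<Rightarrow> bool" where
  "X_lipschitz p K G \<longleftrightarrow> (\<forall>t f g c. in_X p f \<longrightarrow> in_X p g \<longrightarrow>
     (\<forall>b\<in>Zp p \<times> UNIV. \<bar>xel_at f b - xel_at g b\<bar> \<le> c) \<longrightarrow>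
     (\<forall>a\<in>Zp p \<times> UNIV. \<bar>xel_at (G f t) a - xel_at (G g t) a\<bar> \<le> K * c))"

lemma X_lipschitzD:
  "X_lipschitz p K G \<Longrightarrow> in_X p f \<Longrightarrow> in_X p g \<Longrightarrow>
    (\<And>b. b \<in> Zp p \<times> UNIV \<Longrightarrow> \<bar>xel_at f b - xel_at g b\<bar> \<le> c) \<Longrightarrow> a \<in> Zp p \<times> UNIV \<Longrightarrow>
    \<bar>xel_at (G f t) a - xel_at (G g t) a\<bar> \<le> K * c"
  unfolding X_lipschitz_def by blast

lemma Pl_forcing_le:
  assumes p: "p > 1" and G: "X_lipschitz p K G" and fg: "in_X p f" "in_X p g"
    and c: "\<And>b. b \<in> Zp p \<times> UNIV \<Longrightarrow> \<bar>xel_at f b - xel_at g b\<bar> \<le> c"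
    and osc: "osc_le p l (fst (G g t)) \<epsilon>" "osc_le p l (snd (G g t)) \<epsilon>"
    and a: "a \<in> Zp p \<times> UNIV"
  shows "\<bar>xel_at (Pl p l (G f t)) a - xel_at (G g t) a\<bar> \<le> K * c + \<epsilon>"
proof -
  obtain x b where x: "a = (x, b)" "x \<in> Zp p" using a by auto
  have "(zp_of_int p (x l), b) \<in> Zp p \<times> UNIV" using zp_of_int_in_Zp[OF Zp_pos[OF x(2)]] by simp
  then have "\<bar>xel_at (Pl p l (G f t)) a - xel_at (Pl p l (G g t)) a\<bar> \<le> K * c"
    using X_lipschitzD[OF G fg c] x xel_at_Pl[OF p x(2)] by simp
  moreover have "\<bar>xel_at (Pl p l (G g t)) a - xel_at (G g t) a\<bar> \<le> \<epsilon>"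
    by (rule Pl_approx[OF p osc a])
  ultimately show ?thesis by linarith
qed

lemma discretization_error_bound:
  fixes G :: "xel \<Rightarrow> real \<Rightarrow> xel"
  assumes p: "p > 1" and \<tau>: "\<tau> > 0" and K: "K \<ge> 0" and \<epsilon>: "\<epsilon> > 0" and G: "X_lipschitz p K G"
    and sol: "is_C1_solution p \<tau> G u0 u"
    and sol_l: "is_C1_solution p \<tau> (\<lambda>f s. Pl p l (G f s)) (Pl p l u0) v"
    and osc: "\<And>t. t \<in> {0..T} \<Longrightarrow> osc_le p l (fst (G (u t) t)) \<epsilon> \<and> osc_le p l (snd (G (u t) t)) \<epsilon>"
    and osc0: "osc_le p l (fst u0) \<epsilon>" "osc_le p l (snd u0) \<epsilon>"
    and t: "t \<in> {0..T}"
  shows "Xnorm p (Xsub (v t) (u t)) < 2 * \<epsilon> * exp (K * t / \<tau>)"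
proof -
  obtain u' where uX: "\<And>t. t \<ge> 0 \<Longrightarrow> in_X p (u t)"
    and du: "has_derivative_uniformly (Zp p \<times> UNIV) {0..} (\<lambda>t. xel_at (u t)) (\<lambda>t. xel_at (u' t))"
    and ode_u: "\<And>t a. t \<ge> 0 \<Longrightarrow> a \<in> Zp p \<times> UNIV \<Longrightarrow> \<tau> * xel_at (u' t) a = xel_at (G (u t) t) a - xel_at (u t) a"
    and init_u: "\<And>a. a \<in> Zp p \<times> UNIV \<Longrightarrow> xel_at (u 0) a = xel_at u0 a"
    using is_C1_solutionD[OF p \<tau> sol] by metis
  obtain v' where vX: "\<And>t. t \<ge> 0 \<Longrightarrow> in_X p (v t)"
    and dv: "has_derivative_uniformly (Zp p \<times> UNIV) {0..} (\<lambda>t. xel_at (v t)) (\<lambda>t. xel_at (v' t))"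
    and ode_v: "\<And>t a. t \<ge> 0 \<Longrightarrow> a \<in> Zp p \<times> UNIV \<Longrightarrow>
        \<tau> * xel_at (v' t) a = xel_at (Pl p l (G (v t) t)) a - xel_at (v t) a"
    and init_v: "\<And>a. a \<in> Zp p \<times> UNIV \<Longrightarrow> xel_at (v 0) a = xel_at (Pl p l u0) a"
    using is_C1_solutionD[OF p \<tau> sol_l] by metis
  define \<phi> where "\<phi> t = Xnorm p (Xsub (v t) (u t))" for t
  define D where "D t a = xel_at (v t) a - xel_at (u t) a" for t a
  define D' where "D' t a = xel_at (v' t) a - xel_at (u' t) a" for t a
  define F where "F t a = xel_at (Pl p l (G (v t) t)) a - xel_at (G (u t) t) a" for t a
  have ge: "\<bar>D t a\<bar> \<le> \<phi> t" if "t \<ge> 0" "a \<in> Zp p \<times> UNIV" for t a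
    using abs_xel_at_diff_le_Xnorm[OF p vX[OF that(1)] uX[OF that(1)] that(2)] by (simp add: D_def \<phi>_def)
  have least: "\<phi> t \<le> c" if "\<And>a. a \<in> Zp p \<times> UNIV \<Longrightarrow> \<bar>D t a\<bar> \<le> c" for t c
    using Xnorm_le[of p "Xsub (v t) (u t)" c] that p by (simp add: \<phi>_def D_def)
  have "continuous_on_uniformly (Zp p \<times> UNIV) {0..} D"
    unfolding D_def
    by (rule continuous_on_uniformly_diff[OF is_C1_solution_continuous[OF p \<tau> sol_l]
          is_C1_solution_continuous[OF p \<tau> sol]])
  then have cont: "continuous_on_uniformly (Zp p \<times> UNIV) {0..T} D"
    by (rule continuous_on_uniformly_subset) auto
  have "has_derivative_uniformly (Zp p \<times> UNIV) {0..} D D'"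
    unfolding D_def D'_def by (rule has_derivative_uniformly_diff[OF dv du])
  then have der: "has_derivative_uniformly (Zp p \<times> UNIV) {0..T} D D'"
    by (rule has_derivative_uniformly_subset) auto
  have ode: "\<tau> * D' t a = F t a - D t a" if "t \<in> {0..T}" "a \<in> Zp p \<times> UNIV" for t a
    using ode_u[of t a] ode_v[of t a] that by (simp add: D_def D'_def F_def algebra_simps)
  have forcing: "\<bar>F t a\<bar> \<le> K * \<phi> t + \<epsilon>" if "t \<in> {0..T}" "a \<in> Zp p \<times> UNIV" for t a
  proof -
    from that(1) have "t \<ge> 0" by simp
    with that osc ge show ?thesis
      unfolding F_def by (intro Pl_forcing_le[OF p G vX uX]) (auto simp: D_def)
  qed
  have "\<phi> 0 \<le> \<epsilon>"
    using Pl_approx[OF p osc0] init_u init_v by (intro least) (simp add: D_def)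
  with \<epsilon> have "\<phi> 0 < 2 * \<epsilon>" by simp
  show ?thesis
    unfolding \<phi>_def[symmetric]
    by (rule sup_growth_bound[OF \<tau> K _ _ cont der ode forcing \<open>\<phi> 0 < 2 * \<epsilon>\<close> _ t])
      (use ge least \<epsilon> in auto)
qed

lemma abs_SUP_interval_le:
  fixes f :: "real \<Rightarrow> real"
  assumes "T \<ge> 0" and "\<And>t. t \<in> {0..T} \<Longrightarrow> 0 \<le> f t \<and> f t \<le> M"
  shows "\<bar>SUP t\<in>{0..T}. f t\<bar> \<le> M"
proof -
  have "(SUP t\<in>{0..T}. f t) \<le> M" using assms by (intro cSUP_least) auto
  moreover have "f 0 \<le> (SUP t\<in>{0..T}. f t)"
    using assms by (intro cSUP_upper bdd_aboveI2[of _ _ M]) auto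
  ultimately show ?thesis using assms by fastforce
qed

lemma discretization_tendsto:
  fixes G :: "xel \<Rightarrow> real \<Rightarrow> xel" and v :: "nat \<Rightarrow> real \<Rightarrow> xel"
  assumes p: "p > 1" and \<tau>: "\<tau> > 0" and K: "K \<ge> 0" and G: "X_lipschitz p K G" and "T \<ge> 0"
    and sol: "is_C1_solution p \<tau> G u0 u"
    and sol_l: "\<And>l. l \<ge> 1 \<Longrightarrow> is_C1_solution p \<tau> (\<lambda>f s. Pl p l (G f s)) (Pl p l u0) (v l)"
    and osc: "\<And>e. e > 0 \<Longrightarrow> \<forall>\<^sub>F l in sequentially. \<forall>t\<in>{0..T}.
        osc_le p l (fst (G (u t) t)) e \<and> osc_le p l (snd (G (u t) t)) e"
    and u0: "in_X p u0"
  shows "(\<lambda>l. SUP t\<in>{0..T}. Xnorm p (Xsub (v l t) (u t))) \<longlonglongrightarrow> 0"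
proof (rule tendstoI)
  fix r :: real assume "r > 0"
  define \<epsilon> where "\<epsilon> = r / (4 * exp (K * T / \<tau>))"
  have "\<epsilon> > 0" "2 * \<epsilon> * exp (K * T / \<tau>) < r" using \<open>r > 0\<close> by (simp_all add: \<epsilon>_def)
  from eventually_ge_at_top[of 1] osc[OF \<open>\<epsilon> > 0\<close>] in_X_osc_eventually[OF p u0 \<open>\<epsilon> > 0\<close>]
  show "\<forall>\<^sub>F l in sequentially. dist (SUP t\<in>{0..T}. Xnorm p (Xsub (v l t) (u t))) 0 < r"
  proof eventually_elim
    case (elim l)
    have bound: "0 \<le> Xnorm p (Xsub (v l t) (u t)) \<and> Xnorm p (Xsub (v l t) (u t)) \<le> 2 * \<epsilon> * exp (K * T / \<tau>)"
      if "t \<in> {0..T}" for t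
    proof
      have "in_X p (v l t)" "in_X p (u t)"
        using sol sol_l[OF elim(1)] that by (simp_all add: is_C1_solution_def)
      then show "0 \<le> Xnorm p (Xsub (v l t) (u t))"
        using abs_xel_at_diff_le_Xnorm[OF p, of "v l t" "u t" "(zp_zero, True)"] zp_zero_in_Zp[of p] p
        by fastforce
      have "exp (K * t / \<tau>) \<le> exp (K * T / \<tau>)"
        using that K \<tau> by (auto intro!: divide_right_mono mult_left_mono)
      with discretization_error_bound[OF p \<tau> K \<open>\<epsilon> > 0\<close> G sol sol_l[OF elim(1)] _ _ _ that] elim
      show "Xnorm p (Xsub (v l t) (u t)) \<le> 2 * \<epsilon> * exp (K * T / \<tau>)"
        using \<open>\<epsilon> > 0\<close> by (smt (verit) mult_left_mono)
    qed
    from abs_SUP_interval_le[where f = "\<lambda>t. Xnorm p (Xsub (v l t) (u t))", OF \<open>T \<ge> 0\<close> bound]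
      \<open>2 * \<epsilon> * exp (K * T / \<tau>) < r\<close>
    show ?case by simp
  qed
qed

lemma Hop_lipschitz:
  assumes p: "p > 1" and SE: "LE-lipschitz_on UNIV SE" and SI: "LI-lipschitz_on UNIV SI"
    and w: "zp_continuous p wEE" "zp_continuous p wEI" "zp_continuous p wIE" "zp_continuous p wII"
  obtains K where "K \<ge> 0" "X_lipschitz p K (Hop p SE SI wEE wEI wIE wII hE hI)"
proof -
  have uc: "zp_ucont p wEE" "zp_ucont p wEI" "zp_ucont p wIE" "zp_ucont p wII"
    using zp_continuous_imp_ucont[OF p] w by auto
  define K where "K = max (LE * (supn p wEE + supn p wEI)) (LI * (supn p wIE + supn p wII))"
  have "0 \<le> supn p w" if "zp_ucont p w" for w
    using order_trans[OF abs_ge_zero abs_le_supn[OF that zp_zero_in_Zp]] p by simp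
  then have "K \<ge> 0"
    unfolding K_def using lipschitz_on_nonneg[OF SE] uc by (simp add: max.coboundedI1)
  moreover have "X_lipschitz p K (Hop p SE SI wEE wEI wIE wII hE hI)"
    unfolding X_lipschitz_def
  proof (intro allI impI ballI)
    fix t c :: real and f g :: xel and a :: "zp \<times> bool"
    assume f: "in_X p f" and g: "in_X p g"
      and c: "\<forall>b\<in>Zp p \<times> UNIV. \<bar>xel_at f b - xel_at g b\<bar> \<le> c" and a: "a \<in> Zp p \<times> UNIV"
    obtain y b where y: "a = (y, b)" "y \<in> Zp p" using a by auto
    have cx: "\<bar>fst f x - fst g x\<bar> \<le> c" "\<bar>snd f x - snd g x\<bar> \<le> c" if "x \<in> Zp p" for x
      using bspec[OF c, of "(x, True)"] bspec[OF c, of "(x, False)"] that by auto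
    then have "c \<ge> 0" using y(2) by (meson abs_ge_zero order_trans)
    have ucfg: "zp_ucont p (fst f)" "zp_ucont p (snd f)" "zp_ucont p (fst g)" "zp_ucont p (snd g)"
      using in_X_ucont[OF p f] in_X_ucont[OF p g] by auto
    have "\<bar>Hcomp p SE wEE wEI (hE t) (fst f) (snd f) y - Hcomp p SE wEE wEI (hE t) (fst g) (snd g) y\<bar>
        \<le> LE * ((supn p wEE + supn p wEI) * c + \<bar>hE t y - hE t y\<bar>)"
      by (rule Hcomp_diff_le[OF SE uc(1,2) abs_le_supn[OF uc(1)] abs_le_supn[OF uc(2)] ucfg cx y(2)])
    moreover have "\<bar>Hcomp p SI wIE wII (hI t) (fst f) (snd f) y - Hcomp p SI wIE wII (hI t) (fst g) (snd g) y\<bar>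
        \<le> LI * ((supn p wIE + supn p wII) * c + \<bar>hI t y - hI t y\<bar>)"
      by (rule Hcomp_diff_le[OF SI uc(3,4) abs_le_supn[OF uc(3)] abs_le_supn[OF uc(4)] ucfg cx y(2)])
    moreover have "LE * ((supn p wEE + supn p wEI) * c) \<le> K * c" "LI * ((supn p wIE + supn p wII) * c) \<le> K * c"
      using \<open>c \<ge> 0\<close> unfolding K_def by (simp_all add: mult.assoc[symmetric] mult_right_mono)
    ultimately show "\<bar>xel_at (Hop p SE SI wEE wEI wIE wII hE hI f t) a - xel_at (Hop p SE SI wEE wEI wIE wII hE hI g t) a\<bar>
        \<le> K * c"
      using y(1) by (cases b) (auto simp: Hop_eq)
  qed
  ultimately show ?thesis by (rule that)
qed

lemma Hop_solution_osc_eventually: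
  assumes p: "p > 1" and \<tau>: "\<tau> > 0" and SE: "LE-lipschitz_on UNIV SE" and SI: "LI-lipschitz_on UNIV SI"
    and w: "zp_continuous p wEE" "zp_continuous p wEI" "zp_continuous p wIE" "zp_continuous p wII"
    and h: "cont_time_fun p hE" "cont_time_fun p hI"
    and sol: "is_C1_solution p \<tau> (Hop p SE SI wEE wEI wIE wII hE hI) u0 u"
    and "e > 0"
  shows "\<forall>\<^sub>F l in sequentially. \<forall>t\<in>{0..T}.
      osc_le p l (fst (Hop p SE SI wEE wEI wIE wII hE hI (u t) t)) e \<and>
      osc_le p l (snd (Hop p SE SI wEE wEI wIE wII hE hI (u t) t)) e"
proof -
  have u: "\<And>t. t \<ge> 0 \<Longrightarrow> zp_ucont p (fst (u t)) \<and> zp_ucont p (snd (u t))"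
    using sol in_X_ucont[OF p] by (simp add: is_C1_solution_def)
  note u_cont = continuous_on_uniformly_components[OF is_C1_solution_continuous[OF p \<tau> sol]]
  have "\<forall>\<^sub>F l in sequentially. \<forall>t\<in>{0..T}. osc_le p l (Hcomp p SE wEE wEI (hE t) (fst (u t)) (snd (u t))) e"
    by (rule Hcomp_osc_eventually[OF p SE w(1,2) h(1) u u_cont \<open>e > 0\<close>])
  moreover have "\<forall>\<^sub>F l in sequentially. \<forall>t\<in>{0..T}. osc_le p l (Hcomp p SI wIE wII (hI t) (fst (u t)) (snd (u t))) e"
    by (rule Hcomp_osc_eventually[OF p SI w(3,4) h(2) u u_cont \<open>e > 0\<close>])
  ultimately show ?thesis unfolding Hop_eq by eventually_elim auto
qed

theorem theorem2:
  fixes p :: nat and \<tau> :: real and SE SI :: "real \<Rightarrow> real"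
    and wEE wEI wIE wII E0 I0 :: zfun and hE hI :: "real \<Rightarrow> zfun"
    and u :: "real \<Rightarrow> xel" and ul :: "nat \<Rightarrow> real \<Rightarrow> xel"
  assumes "prime p" and "\<tau> > 0"
    and "bounded (range SE)" and "\<exists>L. L-lipschitz_on UNIV SE" and "SE 0 = 0"
    and "bounded (range SI)" and "\<exists>L. L-lipschitz_on UNIV SI" and "SI 0 = 0"
    and "zp_continuous p wEE" and "zp_continuous p wEI"
    and "zp_continuous p wIE" and "zp_continuous p wII"
    and "cont_time_fun p hE" and "cont_time_fun p hI"
    and "in_X p (E0, I0)"
    and "is_C1_solution p \<tau> (Hop p SE SI wEE wEI wIE wII hE hI) (E0, I0) u"
    and "\<And>l. l \<ge> 1 \<Longrightarrow> (\<forall>t\<ge>0. in_Xl p l (ul l t)) \<and>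
           is_C1_solution p \<tau> (\<lambda>f s. Pl p l (Hop p SE SI wEE wEI wIE wII hE hI f s))
             (Pl p l (E0, I0)) (ul l)"
  shows "\<forall>T>0. (\<lambda>l. SUP t\<in>{0..T}. Xnorm p (Xsub (ul l t) (u t))) \<longlonglongrightarrow> 0"
proof (intro allI impI)
  fix T :: real assume "T > 0"
  have p: "p > 1" using \<open>prime p\<close> prime_gt_1_nat by blast
  obtain LE LI where LE: "LE-lipschitz_on UNIV SE" and LI: "LI-lipschitz_on UNIV SI"
    using assms(4,7) by blast
  obtain K where "K \<ge> 0" "X_lipschitz p K (Hop p SE SI wEE wEI wIE wII hE hI)"
    using Hop_lipschitz[OF p LE LI assms(9-12)] by blast
  with \<open>T > 0\<close> show "(\<lambda>l. SUP t\<in>{0..T}. Xnorm p (Xsub (ul l t) (u t))) \<longlonglongrightarrow> 0"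
    using Hop_solution_osc_eventually[OF p assms(2) LE LI assms(9-14,16)] assms(17)
    by (intro discretization_tendsto[OF p assms(2) _ _ _ assms(16) _ _ assms(15)]) auto
qed

end
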